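(* The Mathieu group \(M_{22}\) possesses a symmetric generating set \(T=\{t_1,\dots,t_{14}\}\) consisting of 14 elements of order 2, with control group \(\mathcal{N}\cong L_3(2)\) acting on \(T\) via its transitive 14-point action. That is, there exist a subgroup \(\mathcal{N}\le M_{22}\) with \(\mathcal{N}\cong L_3(2)\) and 14 distinct involutions \(t_1,\dots,t_{14}\in M_{22}\) such that \(M_{22}=\langle t_1,\dots,t_{14}\rangle\), \(\mathcal{N}\) permutes \(\{t_1,\dots,t_{14}\}\) by conjugation, and this permutation action of \(\mathcal{N}\) is transitive and equivalent to the action of \(L_3(2)\) on the 14 cosets of a subgroup isomorphic to \(A_4\).
   Context: A progenitor \(2^{\star n}:\mathcal{N}\) is the semidirect product of the free product of \(n\) cyclic groups of order 2, generated by \(t_1,\dots,t_n\), by a transitive permutation group \(\mathcal{N}\le\Sigma_n\) permuting the \(t_i\). A group \(G\) is symmetrically generated (with symmetric generating set \(\{t_1,\dots,t_n\}\) and control group \(\mathcal{N}\)) if there is an epimorphism from the progenitor to \(G\) that is injective on \(\mathcal{N}\), maps the \(t_i\) to distinct involutions, and such that the images of the \(t_i\) generate \(G\). *)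

theory Defs
  imports "HOL-Algebra.Sym_Groups" "HOL-Combinatorics.Cycles"
begin

definition m23_a :: "nat \<Rightarrow> nat" where
  "m23_a = cycle_of_list [1..<24]"

definition m23_b :: "nat \<Rightarrow> nat" where
  "m23_b = cycle_of_list [3,17,10,7,9] \<circ> cycle_of_list [4,13,14,19,5]
         \<circ> cycle_of_list [8,18,11,12,23] \<circ> cycle_of_list [15,20,22,21,16]"

definition M23 :: "(nat \<Rightarrow> nat) monoid" where
  "M23 = (sym_group 23) \<lparr> carrier := generate (sym_group 23) {m23_a, m23_b} \<rparr>"

definition M22 :: "(nat \<Rightarrow> nat) monoid" where
  "M22 = M23 \<lparr> carrier := {p \<in> carrier M23. p 23 = 23} \<rparr>"

text \<open>L3(2) = GL(3,2), realised as the group of linear bijections of F_2^3,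
  acting on the nonzero vectors encoded as 1..7 (vector addition = bitwise xor).\<close>
definition L32 :: "(nat \<Rightarrow> nat) monoid" where
  "L32 = \<lparr> carrier = {p. p permutes {1..7} \<and>
              (\<forall>x\<in>{0..7}. \<forall>y\<in>{0..7}. p (xor x y) = xor (p x) (p y))},
           mult = (\<circ>), one = id \<rparr>"

end

theory Submission
  imports Defs "HOL-Library.List_Lexorder"
begin

text \<open>
  The control group L3(2) is
  embedded into M22 with orbits of lengths 7, 7 and 8 on \<open>{1..22}\<close>: on the two 7-point orbits it
  acts as on the nonzero vectors of \<open>F\<^sub>2\<^sup>3\<close>, on the remaining 8 points as on the eight Fano planes
  on \<open>{1..7}\<close> that share no line with the standard one.

  The 14 involutions are indexed by the oriented lines of the projective plane: the flag of two
  distinct points (a, b) is identified with (b, a + b) and (a + b, a). An element of L3(2) is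
  thus assigned to the oriented line through its images of 1 and 2, the stabiliser of the
  oriented line through 1, 2, 3 is A4 (it acts by even permutations on the four points 4..7 off
  the line), and it suffices to check on two generators of L3(2) that conjugation permutes the
  involutions like oriented lines.

  The involutions generate M22 by Schreier's argument: the powers \<open>a\<^sup>k\<close>, \<open>k < 23\<close>, are coset
  representatives of the stabiliser of 23, and each Schreier generator \<open>a\<^sup>-\<^sup>j b a\<^sup>k\<close> is an explicit
  word in the involutions.
\<close>

section \<open>Permutations of \<open>{1..n}\<close> given by lists of images\<close>

definition perm_of_list :: "nat list \<Rightarrow> nat \<Rightarrow> nat" where
  "perm_of_list xs x = (if 1 \<le> x \<and> x \<le> length xs then xs ! (x - 1) else x)"

definition comp_list :: "nat list \<Rightarrow> nat list \<Rightarrow> nat list" where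
  "comp_list xs ys = map (perm_of_list xs) ys"

definition id_list :: "nat \<Rightarrow> nat list" where
  "id_list n = [1..<Suc n]"

definition eval_word :: "nat \<Rightarrow> nat list list \<Rightarrow> nat list \<Rightarrow> nat list" where
  "eval_word n gs w = foldr (\<lambda>i. comp_list (gs ! i)) w (id_list n)"

lemma length_comp_list [simp]: "length (comp_list xs ys) = length ys"
  by (simp add: comp_list_def)

lemma length_comp_list_pow [simp]: "length ((comp_list xs ^^ k) ys) = length ys"
  by (induction k) simp_all

lemma length_id_list [simp]: "length (id_list n) = n"
  by (simp add: id_list_def)

lemma perm_of_list_comp_list:
  "length xs = length ys \<Longrightarrow> perm_of_list (comp_list xs ys) = perm_of_list xs \<circ> perm_of_list ys"
  by (auto simp: fun_eq_iff perm_of_list_def comp_list_def)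

lemma perm_of_list_id_list [simp]: "perm_of_list (id_list n) = id"
  by (auto simp: fun_eq_iff perm_of_list_def id_list_def simp del: upt_Suc)

lemma perm_of_list_pow:
  "length xs = n \<Longrightarrow> perm_of_list ((comp_list xs ^^ k) (id_list n)) = perm_of_list xs ^^ k"
  by (induction k) (simp_all add: perm_of_list_comp_list)

lemma perm_of_list_inj:
  assumes "length xs = length ys" "perm_of_list xs = perm_of_list ys"
  shows "xs = ys"
proof (rule nth_equalityI)
  fix i assume "i < length xs"
  then show "xs ! i = ys ! i"
    using fun_cong[OF assms(2), of "Suc i"] assms(1) by (simp add: perm_of_list_def)
qed (fact assms(1))

lemma perm_of_list_eqI:
  assumes "map f (id_list n) = xs" and "\<And>x. x \<notin> {1..n} \<Longrightarrow> f x = x"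
  shows "f = perm_of_list xs"
proof
  fix x show "f x = perm_of_list xs x"
  proof (cases "x \<in> {1..n}")
    case True
    then have "id_list n ! (x - 1) = x" "x - 1 < n" by (auto simp: id_list_def simp del: upt_Suc)
    then show ?thesis using True by (auto simp: perm_of_list_def simp flip: assms(1))
  qed (use assms in \<open>auto simp: perm_of_list_def\<close>)
qed

lemma eval_word_in:
  assumes "\<And>i. i \<in> set w \<Longrightarrow> perm_of_list (gs ! i) \<in> G \<and> length (gs ! i) = n"
    and "\<And>p q. p \<in> G \<Longrightarrow> q \<in> G \<Longrightarrow> p \<circ> q \<in> G" and "id \<in> G"
  shows "perm_of_list (eval_word n gs w) \<in> G \<and> length (eval_word n gs w) = n"
  using assms(1)
proof (induction w)
  case (Cons i w)
  then have IH: "perm_of_list (eval_word n gs w) \<in> G" "length (eval_word n gs w) = n"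
    and i: "perm_of_list (gs ! i) \<in> G" "length (gs ! i) = n" by auto
  have "eval_word n gs (i # w) = comp_list (gs ! i) (eval_word n gs w)"
    by (simp add: eval_word_def)
  then show ?case using assms(2)[OF i(1) IH(1)] IH(2) i(2) by (metis perm_of_list_comp_list length_comp_list)
qed (simp add: eval_word_def assms(3))

section \<open>Generation by closure under left multiplication\<close>

lemma sym_group_pow: "p [^]\<^bsub>sym_group n\<^esub> (k::nat) = p ^^ k"
  by (induction k) (simp_all add: sym_group_def fun_eq_iff funpow_swap1)

text \<open>Only left multiplication by the generators is required: their inverses are positive powers.\<close>
lemma (in group) generate_subset_if_left_mult_closed:
  assumes S: "S \<subseteq> carrier G" and X: "X \<subseteq> carrier G" "\<one> \<in> X"
    and closed: "\<And>s x. s \<in> S \<Longrightarrow> x \<in> X \<Longrightarrow> s \<otimes> x \<in> X"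
    and torsion: "\<And>s. s \<in> S \<Longrightarrow> \<exists>n>0. s [^] (n::nat) = \<one>"
  shows "generate G S \<subseteq> X"
proof -
  have pow_closed: "s [^] (n::nat) \<otimes> x \<in> X" if s: "s \<in> S" and "x \<in> X" for s n x
    using \<open>x \<in> X\<close>
  proof (induction n arbitrary: x)
    case 0 then show ?case using X by auto
  next
    case (Suc n)
    have "s [^] Suc n \<otimes> x = s [^] n \<otimes> (s \<otimes> x)"
      using S s Suc.prems X by (simp add: m_assoc subset_iff)
    then show ?case using Suc.IH closed[OF s Suc.prems] by simp
  qed
  have inv_closed: "inv s \<otimes> x \<in> X" if s: "s \<in> S" and x: "x \<in> X" for s x
  proof -
    obtain n where "n > 0" "s [^] (n::nat) = \<one>" using torsion[OF s] by blast
    then have "s [^] (n - 1) \<otimes> s = \<one>" by (metis Suc_diff_1 nat_pow_Suc)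
    then have "inv s = s [^] (n - 1)" using S s by (auto intro: inv_equality)
    then show ?thesis using pow_closed[OF s x] by simp
  qed
  have "\<forall>x\<in>X. h \<otimes> x \<in> X" if "h \<in> generate G S" for h
    using that
  proof (induction rule: generate.induct)
    case (eng h1 h2)
    have "h1 \<otimes> h2 \<otimes> x = h1 \<otimes> (h2 \<otimes> x)" if "x \<in> X" for x
      using eng.hyps generate_in_carrier[OF S] X that by (auto simp: m_assoc)
    then show ?case using eng.IH by simp
  qed (use X closed inv_closed in auto)
  then show ?thesis using X generate_in_carrier[OF S] by (metis r_one subsetI)
qed

section \<open>The groups M23 and M22\<close>

definition b_list :: "nat list" where "b_list = [1,2,17,13,4,6,9,18,3,7,12,23,14,19,20,15,10,11,5,22,16,21,8]"

lemma length_b_list [simp]: "length b_list = 23"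
  by (simp add: b_list_def)

lemma id_list_23: "id_list 23 = [1,2,3,4,5,6,7,8,9,10,11,12,13,14,15,16,17,18,19,20,21,22,23]"
  by code_simp

lemma m23_b_eq: "m23_b = perm_of_list b_list"
proof (rule perm_of_list_eqI)
  show "map m23_b (id_list 23) = b_list"
    by (simp add: m23_b_def id_list_23 b_list_def)
next
  fix x :: nat assume "x \<notin> {1..23}"
  then have "x \<notin> set [3,17,10,7,9]" "x \<notin> set [4,13,14,19,5]" "x \<notin> set [8,18,11,12,23]"
    "x \<notin> set [15,20,22,21,16]" by auto
  then have "cycle_of_list [3,17,10,7,9] x = x" "cycle_of_list [4,13,14,19,5] x = x"
    "cycle_of_list [8,18,11,12,23] x = x" "cycle_of_list [15,20,22,21,16] x = x"
    using id_outside_supp by metis+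
  then show "m23_b x = x" unfolding m23_b_def by (simp only: comp_apply)
qed

lemma m23_a_in_sym_group: "m23_a \<in> carrier (sym_group 23)"
proof -
  have "{1..<24::nat} = {1..23}" by auto
  then show ?thesis unfolding sym_group_carrier m23_a_def
    using cycle_permutes[of "[1..<24::nat]"] by simp
qed

lemma m23_b_in_sym_group: "m23_b \<in> carrier (sym_group 23)"
proof -
  have cycle: "cycle_of_list cs permutes {1..23}" if "set cs \<subseteq> {1..23}" for cs :: "nat list"
    using cycle_permutes permutes_subset that by blast
  show ?thesis unfolding sym_group_carrier m23_b_def
    by (intro permutes_compose cycle) auto
qed

lemma carrier_M23: "carrier M23 = generate (sym_group 23) {m23_a, m23_b}"
  by (simp add: M23_def)

lemma carrier_M22: "carrier M22 = {p \<in> carrier M23. p 23 = 23}"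
  by (simp add: M22_def)

lemma M23_simps [simp]: "mult M23 = (\<circ>)" "one M23 = id"
  and M22_simps [simp]: "mult M22 = (\<circ>)" "one M22 = id"
  by (simp_all add: M22_def M23_def sym_group_def)

lemma M23_subgroup: "subgroup (carrier M23) (sym_group 23)"
  unfolding carrier_M23 using m23_a_in_sym_group m23_b_in_sym_group
  by (intro group.generate_is_subgroup[OF sym_group_is_group]) auto

lemma M22_subgroup: "subgroup (carrier M22) (sym_group 23)"
proof (rule group.subgroupI[OF sym_group_is_group])
  show "carrier M22 \<subseteq> carrier (sym_group 23)"
    using subgroup.subset[OF M23_subgroup] by (auto simp: carrier_M22)
  show "carrier M22 \<noteq> {}"
    using subgroup.one_closed[OF M23_subgroup] by (auto simp: carrier_M22 sym_group_def)
next
  fix p assume p: "p \<in> carrier M22"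
  then have "p \<in> carrier M23" "p 23 = 23" "p permutes {1..23}"
    using subgroup.subset[OF M23_subgroup] by (auto simp: carrier_M22 sym_group_carrier)
  moreover have "inv\<^bsub>sym_group 23\<^esub> p = inv' p"
    using \<open>p permutes {1..23}\<close> by (simp add: sym_group_carrier)
  ultimately show "inv\<^bsub>sym_group 23\<^esub> p \<in> carrier M22"
    using subgroup.m_inv_closed[OF M23_subgroup] permutes_inj
    by (fastforce simp: carrier_M22 inv_f_eq)
next
  fix p q assume "p \<in> carrier M22" "q \<in> carrier M22"
  then show "p \<otimes>\<^bsub>sym_group 23\<^esub> q \<in> carrier M22"
    using subgroup.m_closed[OF M23_subgroup] by (auto simp: carrier_M22 sym_group_def)
qed

lemma M22_eq: "M22 = (sym_group 23)\<lparr>carrier := carrier M22\<rparr>"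
  by (simp add: M22_def M23_def)

lemma M22_group: "group M22"
  by (subst M22_eq) (rule group.subgroup_imp_group[OF sym_group_is_group M22_subgroup])

lemma M23_comp: "p \<in> carrier M23 \<Longrightarrow> q \<in> carrier M23 \<Longrightarrow> p \<circ> q \<in> carrier M23"
  using subgroup.m_closed[OF M23_subgroup] by (simp add: sym_group_def)

lemma M22_comp: "p \<in> carrier M22 \<Longrightarrow> q \<in> carrier M22 \<Longrightarrow> p \<circ> q \<in> carrier M22"
  using subgroup.m_closed[OF M22_subgroup] by (simp add: sym_group_def)

lemma M22_id: "id \<in> carrier M22"
  using subgroup.one_closed[OF M22_subgroup] by (simp add: sym_group_def)

lemma m23_a_pow_in_M23: "m23_a ^^ k \<in> carrier M23"
proof (induction k)
  case 0
  have "id \<in> carrier M23" using subgroup.one_closed[OF M23_subgroup] by (simp add: sym_group_def)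
  then show ?case by (simp add: id_def)
next
  case (Suc k)
  have "m23_a \<in> carrier M23" by (auto simp: carrier_M23 intro: generate.incl)
  then show ?case using M23_comp[OF _ Suc] by (simp only: funpow.simps(2))
qed

lemma m23_b_in_M23: "m23_b \<in> carrier M23"
  by (auto simp: carrier_M23 intro: generate.incl)

lemma mod_23_shift: fixes x :: nat assumes "0 < x" "x \<le> 23" shows "(22 + x) mod 23 = x - 1"
proof -
  have "22 + x = (x - 1) + 23" using assms by simp
  then have "(22 + x) mod 23 = (x - 1) mod 23" by (metis mod_add_self2)
  then show ?thesis using assms by simp
qed

lemma m23_a_pow_fixes: assumes "x \<notin> {1..23}" shows "(m23_a ^^ k) x = x"
proof -
  have "x \<notin> set [1..<24]" using assms by auto
  then show ?thesis by (induction k) (simp_all add: m23_a_def id_outside_supp)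
qed

lemma m23_a_pow_eq: "m23_a ^^ k = perm_of_list (rotate k (id_list 23))"
proof (rule perm_of_list_eqI)
  show "map (m23_a ^^ k) (id_list 23) = rotate k (id_list 23)"
    using cyclic_rotation[of "[1..<24]" k] by (simp add: m23_a_def id_list_def del: upt_Suc)
qed (rule m23_a_pow_fixes)

lemma m23_a_pow_apply: assumes "x \<in> {1..23}" shows "(m23_a ^^ k) x = (k + x - 1) mod 23 + 1"
proof -
  have "x - 1 < 23" using assms by auto
  then show ?thesis using assms
    by (simp add: m23_a_pow_eq perm_of_list_def nth_rotate id_list_def del: upt_Suc)
qed

lemma m23_a_pow_23: "m23_a ^^ 23 = id"
proof
  fix x :: nat
  show "(m23_a ^^ 23) x = id x"
  proof (cases "x \<in> {1..23}")
    case True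
    then show ?thesis by (simp add: m23_a_pow_apply mod_23_shift)
  qed (simp add: m23_a_pow_fixes)
qed

lemma m23_a_pow_23_apply: assumes "0 < k" "k < 23" shows "(m23_a ^^ k) 23 = k"
  using assms by (simp add: m23_a_pow_apply mod_23_shift)

lemma m23_a_pow_mod: "m23_a ^^ (k mod 23) = m23_a ^^ k"
proof -
  have "m23_a ^^ k = (m23_a ^^ 23) ^^ (k div 23) \<circ> m23_a ^^ (k mod 23)"
    by (metis div_mult_mod_eq funpow_add funpow_mult mult.commute)
  then show ?thesis by (simp add: m23_a_pow_23)
qed

lemma m23_b_pow_5: "m23_b ^^ 5 = id"
proof -
  have "(comp_list b_list ^^ 5) (id_list 23) = id_list 23" by code_simp
  then show ?thesis by (metis m23_b_eq perm_of_list_pow perm_of_list_id_list length_b_list)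
qed

text \<open>\<open>a\<^sup>k\<close> moves 23 to k, so \<open>schreier k\<close> is \<open>a\<^sup>-\<^sup>j b a\<^sup>k\<close> with \<open>a\<^sup>j 23 = b (a\<^sup>k 23)\<close>.\<close>
definition schreier :: "nat \<Rightarrow> nat \<Rightarrow> nat" where
  "schreier k = m23_a ^^ ((23 - m23_b ((m23_a ^^ k) 23) mod 23) mod 23) \<circ> (m23_b \<circ> m23_a ^^ k)"

lemma b_comp_a_pow: "\<exists>j<23. m23_b \<circ> m23_a ^^ k = m23_a ^^ j \<circ> schreier k"
proof -
  define j where "j = m23_b ((m23_a ^^ k) 23) mod 23"
  define j' where "j' = (23 - j) mod 23"
  have j: "j < 23" by (simp add: j_def)
  have "(j + j') mod 23 = 0"
  proof (cases "j = 0")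
    case False
    then have "j + j' = 23" using j by (simp add: j'_def)
    then show ?thesis by simp
  qed (simp add: j'_def)
  then have "m23_a ^^ ((j + j') mod 23) = id" by simp
  then have inv: "m23_a ^^ j \<circ> m23_a ^^ j' = id"
    by (simp only: m23_a_pow_mod funpow_add)
  have "m23_a ^^ j \<circ> schreier k = (m23_a ^^ j \<circ> m23_a ^^ j') \<circ> (m23_b \<circ> m23_a ^^ k)"
    unfolding schreier_def j'_def j_def by (simp only: comp_assoc)
  also have "\<dots> = m23_b \<circ> m23_a ^^ k" by (simp add: inv)
  finally show ?thesis using j by metis
qed

lemma schreier_in_M22: "schreier k \<in> carrier M22"
proof -
  have "schreier k \<in> carrier M23"
    unfolding schreier_def by (intro M23_comp m23_a_pow_in_M23 m23_b_in_M23)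
  moreover
  define y where "y = m23_b ((m23_a ^^ k) 23)"
  have "(m23_a ^^ k) 23 \<in> {1..23}"
    using m23_a_pow_apply[of 23 k] by simp
  then have y: "y \<in> {1..23}"
    using m23_b_in_sym_group permutes_in_image by (fastforce simp: y_def sym_group_carrier)
  have "(m23_a ^^ ((23 - y mod 23) mod 23)) y = 23"
  proof (cases "y = 23")
    case False
    then have "(23 - y mod 23) mod 23 + y - 1 = 22" using y by auto
    then show ?thesis using y by (simp add: m23_a_pow_apply)
  qed (simp add: m23_a_pow_apply)
  then have "schreier k 23 = 23" by (simp add: schreier_def y_def)
  ultimately show ?thesis by (simp add: carrier_M22)
qed

definition schreier_list :: "nat \<Rightarrow> nat list" where
  "schreier_list k = (let ba = comp_list b_list (rotate k (id_list 23))
     in comp_list (rotate ((23 - ba ! 22 mod 23) mod 23) (id_list 23)) ba)"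

lemma perm_of_schreier_list: "perm_of_list (schreier_list k) = schreier k"
proof -
  have a: "perm_of_list (rotate i (id_list 23)) = m23_a ^^ i" for i
    by (simp add: m23_a_pow_eq)
  have ba: "perm_of_list (comp_list b_list (rotate k (id_list 23))) = m23_b \<circ> m23_a ^^ k"
    by (simp only: perm_of_list_comp_list length_b_list length_rotate length_id_list m23_b_eq a)
  have "comp_list b_list (rotate k (id_list 23)) ! 22 = m23_b ((m23_a ^^ k) 23)"
    using fun_cong[OF ba, of 23] by (simp add: perm_of_list_def)
  then show ?thesis
    unfolding schreier_list_def Let_def schreier_def
    by (simp only: perm_of_list_comp_list length_comp_list length_rotate length_id_list a ba)
qed

text \<open>The values of \<open>schreier_list\<close>, tabulated so that words in them evaluate quickly.\<close>
definition schreier_table :: "nat list list" where "schreier_table = [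
  [16,17,9,5,19,21,1,10,18,22,4,15,6,11,12,7,2,3,20,14,8,13,23],
  [1,16,12,3,5,8,17,2,6,11,22,13,18,19,14,9,10,4,21,15,20,7,23],
  [15,11,2,4,7,16,1,5,10,21,12,17,18,13,8,9,3,20,14,19,6,22,23],
  [19,10,12,15,1,9,13,18,6,20,2,3,21,16,17,11,5,22,4,14,7,8,23],
  [14,16,19,5,13,17,22,10,1,6,7,2,20,21,15,9,3,8,18,11,12,4,23],
  [2,5,14,22,3,8,19,10,15,16,11,6,7,1,18,12,17,4,20,21,13,9,23],
  [3,12,20,1,6,17,8,13,14,9,4,5,22,16,10,15,2,18,19,11,7,21,23],
  [9,17,21,3,14,5,10,11,6,1,2,19,13,7,12,22,15,16,8,4,18,20,23],
  [8,12,17,5,19,1,2,20,15,16,10,4,21,3,13,6,7,22,18,9,11,14,23],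
  [4,9,20,11,16,17,12,7,8,2,19,13,18,5,21,22,14,10,1,3,6,15,23],
  [5,16,7,12,13,8,3,4,21,15,9,14,1,17,18,10,6,20,22,2,11,19,23],
  [11,2,7,8,3,21,22,16,10,4,9,19,12,13,5,1,15,17,20,6,14,18,23],
  [14,19,20,15,10,11,5,22,16,21,8,1,2,17,13,4,6,9,18,3,7,12,23],
  [5,6,1,19,20,14,8,2,7,17,10,11,3,22,13,15,18,4,12,16,21,9,23],
  [1,19,14,15,9,3,20,2,12,5,6,21,17,8,10,13,22,7,11,16,4,18,23],
  [18,13,14,8,2,19,1,11,4,5,20,16,7,9,12,21,6,10,15,3,17,22,23],
  [18,19,13,7,1,6,16,9,10,2,21,12,14,17,3,11,15,20,8,22,4,5,23],
  [1,18,12,6,11,21,14,15,7,3,17,19,22,8,16,20,2,13,4,9,10,5,23],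
  [17,11,5,10,20,13,14,6,2,16,18,21,7,15,19,1,12,3,8,9,4,22,23],
  [17,11,16,3,19,20,12,8,22,1,4,13,21,2,7,18,9,14,15,10,5,6,23],
  [17,22,9,2,3,18,14,5,7,10,19,4,8,13,1,15,20,21,16,11,12,6,23],
  [5,15,8,9,1,20,11,13,16,2,10,14,19,7,21,3,4,22,17,18,12,6,23],
  [10,3,4,19,15,6,8,11,20,5,9,14,2,16,21,22,17,12,13,7,1,18,23]]"

lemma length_schreier_table [simp]: "length schreier_table = 23"
  by (simp add: schreier_table_def)

lemma schreier_table: assumes "k < 23" shows "perm_of_list (schreier_table ! k) = schreier k"
proof -
  have table: "schreier_table = map schreier_list [0..<23]" by code_simp
  have "schreier_table ! k = schreier_list k" unfolding table using assms by (simp del: upt_Suc)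
  then show ?thesis by (simp add: perm_of_schreier_list)
qed

lemma schreier_table_lengths: assumes "k < 23" shows "length (schreier_table ! k) = 23"
proof -
  have "\<forall>l\<in>set schreier_table. length l = 23" by (simp add: schreier_table_def)
  then show ?thesis using assms nth_mem[of k schreier_table] by simp
qed

section \<open>The group L3(2)\<close>

text \<open>xor on \<open>{0..7}\<close> as an explicit table, which the simplifier evaluates much faster.\<close>
definition xor_table :: "nat \<Rightarrow> nat \<Rightarrow> nat" where
  "xor_table a b = (if a = 0 then (if b = 0 then 0 else if b = 1 then 1 else if b = 2 then 2 else if b = 3 then 3 else if b = 4 then 4 else if b = 5 then 5 else if b = 6 then 6 else 7) else if a = 1 then (if b = 0 then 1 else if b = 1 then 0 else if b = 2 then 3 else if b = 3 then 2 else if b = 4 then 5 else if b = 5 then 4 else if b = 6 then 7 else 6) else if a = 2 then (if b = 0 then 2 else if b = 1 then 3 else if b = 2 then 0 else if b = 3 then 1 else if b = 4 then 6 else if b = 5 then 7 else if b = 6 then 4 else 5) else if a = 3 then (if b = 0 then 3 else if b = 1 then 2 else if b = 2 then 1 else if b = 3 then 0 else if b = 4 then 7 else if b = 5 then 6 else if b = 6 then 5 else 4) else if a = 4 then (if b = 0 then 4 else if b = 1 then 5 else if b = 2 then 6 else if b = 3 then 7 else if b = 4 then 0 else if b = 5 then 1 else if b = 6 then 2 else 3) else if a = 5 then (if b = 0 then 5 else if b = 1 then 4 else if b = 2 then 7 else if b = 3 then 6 else if b = 4 then 1 else if b = 5 then 0 else if b = 6 then 3 else 2) else if a = 6 then (if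 b = 0 then 6 else if b = 1 then 7 else if b = 2 then 4 else if b = 3 then 5 else if b = 4 then 2 else if b = 5 then 3 else if b = 6 then 0 else 1) else if a = 7 then (if b = 0 then 7 else if b = 1 then 6 else if b = 2 then 5 else if b = 3 then 4 else if b = 4 then 3 else if b = 5 then 2 else if b = 6 then 1 else 0) else 0)"

lemma set_0_7: "{0..7::nat} = {0,1,2,3,4,5,6,7}" and set_1_7: "{1..7::nat} = {1,2,3,4,5,6,7}"
  by auto

lemma xor_eq_xor_table: "a \<in> {0..7} \<Longrightarrow> b \<in> {0..7} \<Longrightarrow> xor a b = xor_table a b"
proof -
  have "\<forall>a\<in>{0,1,2,3,4,5,6,7::nat}. \<forall>b\<in>{0,1,2,3,4,5,6,7::nat}. xor a b = xor_table a b"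
    by (simp add: xor_table_def)
  then show "a \<in> {0..7} \<Longrightarrow> b \<in> {0..7} \<Longrightarrow> xor a b = xor_table a b" unfolding set_0_7 by blast
qed

text \<open>The linear map sending the basis vectors 1, 2, 4 of \<open>F\<^sub>2\<^sup>3\<close> to a, b, c.\<close>
definition lin :: "nat \<Rightarrow> nat \<Rightarrow> nat \<Rightarrow> nat \<Rightarrow> nat" where
  "lin a b c v = (if v = 1 then a else if v = 2 then b else if v = 3 then xor_table a b
    else if v = 4 then c else if v = 5 then xor_table a c else if v = 6 then xor_table b c
    else if v = 7 then xor_table (xor_table a b) c else v)"

definition is_basis :: "nat \<Rightarrow> nat \<Rightarrow> nat \<Rightarrow> bool" where
  "is_basis a b c \<longleftrightarrow> a \<in> {1..7} \<and> b \<in> {1..7} \<and> c \<in> {1..7} \<and> a \<noteq> b \<and> c \<noteq> a \<and> c \<noteq> b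
     \<and> c \<noteq> xor_table a b"

lemma L32_simps [simp]: "mult L32 = (\<circ>)" "one L32 = id"
  by (simp_all add: L32_def)

lemma L32_carrier: "p \<in> carrier L32 \<longleftrightarrow> p permutes {1..7} \<and>
   (\<forall>x\<in>{0..7}. \<forall>y\<in>{0..7}. p (xor x y) = xor (p x) (p y))"
  by (simp add: L32_def)

lemma L32_permutes: "p \<in> carrier L32 \<Longrightarrow> p permutes {1..7}"
  by (simp add: L32_carrier)

lemma L32_xor: "p \<in> carrier L32 \<Longrightarrow> x \<in> {0..7} \<Longrightarrow> y \<in> {0..7} \<Longrightarrow> p (xor x y) = xor (p x) (p y)"
  by (simp add: L32_carrier)

lemma L32_fixes: "p \<in> carrier L32 \<Longrightarrow> v \<notin> {1..7} \<Longrightarrow> p v = v"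
  using L32_permutes permutes_not_in by fastforce

lemma L32_in_1_7: "p \<in> carrier L32 \<Longrightarrow> v \<in> {1..7} \<Longrightarrow> p v \<in> {1..7}"
  using L32_permutes permutes_in_image by fastforce

lemma L32_in_0_7: "p \<in> carrier L32 \<Longrightarrow> v \<in> {0..7} \<Longrightarrow> p v \<in> {0..7}"
  using L32_fixes[of p 0] L32_in_1_7[of p v] by (cases "v = 0") auto

lemma L32_eq_lin: assumes p: "p \<in> carrier L32" shows "p = lin (p 1) (p 2) (p 4)"
proof
  fix v :: nat
  have r: "p 1 \<in> {0..7}" "p 2 \<in> {0..7}" "p 4 \<in> {0..7}" "p 3 \<in> {0..7}"
    using L32_in_0_7[OF p] by auto
  have "p 3 = xor_table (p 1) (p 2)" "p 5 = xor_table (p 1) (p 4)"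
    "p 6 = xor_table (p 2) (p 4)" "p 7 = xor_table (p 3) (p 4)"
    using L32_xor[OF p, of 1 2] L32_xor[OF p, of 1 4] L32_xor[OF p, of 2 4] L32_xor[OF p, of 3 4] r
    by (simp_all add: xor_eq_xor_table)
  moreover have "v = 1 \<or> v = 2 \<or> v = 3 \<or> v = 4 \<or> v = 5 \<or> v = 6 \<or> v = 7 \<or> v \<notin> {1..7}"
    by auto
  ultimately show "p v = lin (p 1) (p 2) (p 4) v"
    using L32_fixes[OF p, of v] by (auto simp: lin_def)
qed

lemma L32_3: "p \<in> carrier L32 \<Longrightarrow> p 3 = xor_table (p 1) (p 2)"
  using L32_eq_lin by (metis lin_def numeral_eq_iff semiring_norm(84,85,86,88,89) numeral_eq_one_iff)

lemma L32_is_basis: assumes p: "p \<in> carrier L32" shows "is_basis (p 1) (p 2) (p 4)"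
proof -
  have "inj p" using L32_permutes[OF p] permutes_inj by blast
  then have "p 4 \<noteq> p 3" "p 1 \<noteq> p 2" "p 4 \<noteq> p 1" "p 4 \<noteq> p 2" by (simp_all add: inj_eq)
  then show ?thesis using L32_3[OF p] L32_in_1_7[OF p] by (auto simp: is_basis_def)
qed

lemma L32_eq: "L32 = (sym_group 7)\<lparr>carrier := carrier L32\<rparr>"
  by (simp add: L32_def sym_group_def)

lemma L32_subgroup: "subgroup (carrier L32) (sym_group 7)"
proof (rule group.subgroupI[OF sym_group_is_group])
  show "carrier L32 \<subseteq> carrier (sym_group 7)" by (auto simp: sym_group_carrier L32_carrier)
  have "id \<in> carrier L32" by (simp add: L32_carrier permutes_id)
  then show "carrier L32 \<noteq> {}" by blast
next
  fix p assume p: "p \<in> carrier L32"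
  then have ps: "p permutes {1..7}" by (rule L32_permutes)
  have ip: "inv' p permutes {1..7}" using permutes_inv[OF ps] .
  have r: "inv' p v \<in> {0..7}" if "v \<in> {0..7}" for v
    using permutes_not_in[OF ip, of 0] permutes_in_image[OF ip, of v] that by (cases "v = 0") auto
  have "inv' p (xor x y) = xor (inv' p x) (inv' p y)" if "x \<in> {0..7}" "y \<in> {0..7}" for x y
  proof -
    have "p (xor (inv' p x) (inv' p y)) = xor (p (inv' p x)) (p (inv' p y))"
      using L32_xor[OF p r[OF that(1)] r[OF that(2)]] .
    also have "\<dots> = xor x y" using permutes_inverses(1)[OF ps] by simp
    finally show ?thesis using permutes_inverses(2)[OF ps] by metis
  qed
  then have "inv' p \<in> carrier L32" using ip by (simp add: L32_carrier)
  then show "inv\<^bsub>sym_group 7\<^esub> p \<in> carrier L32" using ps by (simp add: sym_group_carrier)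
next
  fix p q assume p: "p \<in> carrier L32" and q: "q \<in> carrier L32"
  have "(p \<circ> q) permutes {1..7}" by (rule permutes_compose[OF L32_permutes[OF q] L32_permutes[OF p]])
  moreover have "(p \<circ> q) (xor x y) = xor ((p \<circ> q) x) ((p \<circ> q) y)" if "x \<in> {0..7}" "y \<in> {0..7}" for x y
    using L32_xor[OF q that] L32_xor[OF p L32_in_0_7[OF q that(1)] L32_in_0_7[OF q that(2)]] by simp
  ultimately show "p \<otimes>\<^bsub>sym_group 7\<^esub> q \<in> carrier L32" by (simp add: L32_carrier sym_group_def)
qed

lemma L32_group: "group L32"
  by (subst L32_eq, rule group.subgroup_imp_group[OF sym_group_is_group L32_subgroup])

lemma L32_comp: "p \<in> carrier L32 \<Longrightarrow> q \<in> carrier L32 \<Longrightarrow> p \<circ> q \<in> carrier L32"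
  using monoid.m_closed[OF group.is_monoid[OF L32_group]] by fastforce

lemma L32_id: "id \<in> carrier L32"
  using monoid.one_closed[OF group.is_monoid[OF L32_group]] by fastforce

lemma L32_inv: assumes "p \<in> carrier L32" shows "inv\<^bsub>L32\<^esub> p = inv' p"
proof -
  have "inv\<^bsub>L32\<^esub> p = inv\<^bsub>sym_group 7\<^esub> p"
    by (subst L32_eq, rule group.m_inv_consistent[OF sym_group_is_group L32_subgroup assms])
  also have "\<dots> = inv' p" using L32_permutes[OF assms] by (simp add: sym_group_carrier)
  finally show ?thesis .
qed

lemma L32_inv_closed: "p \<in> carrier L32 \<Longrightarrow> inv' p \<in> carrier L32"
  using group.inv_closed[OF L32_group] L32_inv by metis

lemma L32_inv_apply: "p \<in> carrier L32 \<Longrightarrow> p a = b \<Longrightarrow> inv' p b = a"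
  using L32_permutes permutes_inj inv_f_eq by metis

lemma lin_fixes: "v \<notin> {1..7} \<Longrightarrow> lin a b c v = v"
  by (auto simp: lin_def)

lemma lin_in_L32I:
  assumes "\<forall>x\<in>{1,2,3,4,5,6,7}. lin a b c x \<in> {1,2,3,4,5,6,7}"
    and "\<forall>x\<in>{1,2,3,4,5,6,7}. \<forall>y\<in>{1,2,3,4,5,6,7::nat}. lin a b c x = lin a b c y \<longrightarrow> x = y"
    and "\<forall>x\<in>{0,1,2,3,4,5,6,7}. \<forall>y\<in>{0,1,2,3,4,5,6,7::nat}.
           lin a b c (xor_table x y) = xor_table (lin a b c x) (lin a b c y)"
  shows "lin a b c \<in> carrier L32"
proof -
  have inj: "inj_on (lin a b c) {1..7}" using assms(2) unfolding set_1_7 inj_on_def by blast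
  moreover have "lin a b c ` {1..7} \<subseteq> {1..7}" using assms(1) unfolding set_1_7 by blast
  ultimately have "bij_betw (lin a b c) {1..7} {1..7}"
    using endo_inj_surj[OF _ _ inj] by (simp add: bij_betw_def)
  then have perm: "lin a b c permutes {1..7}" by (rule bij_imp_permutes) (rule lin_fixes)
  have range: "lin a b c x \<in> {0..7}" if "x \<in> {0..7}" for x
  proof (cases "x = 0")
    case False
    then have "x \<in> {1,2,3,4,5,6,7}" using that by auto
    then have "lin a b c x \<in> {1,2,3,4,5,6,7}" using assms(1) by blast
    then show ?thesis by auto
  qed (simp add: lin_def)
  have "lin a b c (xor x y) = xor (lin a b c x) (lin a b c y)" if xy: "x \<in> {0..7}" "y \<in> {0..7}" for x y
    using assms(3) xy unfolding xor_eq_xor_table[OF xy] xor_eq_xor_table[OF range[OF xy(1)] range[OF xy(2)]]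
      set_0_7 by blast
  then show ?thesis using perm unfolding L32_carrier by blast
qed

definition g1 :: "nat \<Rightarrow> nat" where "g1 = lin 1 4 2"

definition g2 :: "nat \<Rightarrow> nat" where "g2 = lin 4 7 6"

lemma g1_in_L32: "g1 \<in> carrier L32" and g2_in_L32: "g2 \<in> carrier L32"
  unfolding g1_def g2_def by (rule lin_in_L32I; simp add: lin_def xor_table_def)+

text \<open>For computation an element of L3(2) is represented by its images of the basis vectors
  1, 2, 4; the letters 0 and 1 of a word stand for \<open>g1\<close> and \<open>g2\<close>.\<close>
fun lin_triple :: "nat \<times> nat \<times> nat \<Rightarrow> nat \<Rightarrow> nat" where
  "lin_triple (a, b, c) = lin a b c"

fun comp_triple :: "nat \<times> nat \<times> nat \<Rightarrow> nat \<times> nat \<times> nat \<Rightarrow> nat \<times> nat \<times> nat" where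
  "comp_triple s (x, y, z) = (lin_triple s x, lin_triple s y, lin_triple s z)"

definition gen_triple :: "nat \<Rightarrow> nat \<times> nat \<times> nat" where
  "gen_triple i = (if i = 0 then (1, 4, 2) else (4, 7, 6))"

definition word_triple :: "nat list \<Rightarrow> nat \<times> nat \<times> nat" where
  "word_triple w = foldr (\<lambda>i. comp_triple (gen_triple i)) w (1, 2, 4)"

text \<open>A word in the generators for each of the 168 elements, found by computer search.\<close>
definition L32_word :: "nat \<Rightarrow> nat \<Rightarrow> nat \<Rightarrow> nat list" where
  "L32_word a b c = (if a = 1 then (if b = 2 then (if c = 4 then [] else if c = 5 then [0,1,0,1,1,0] else if c = 6 then [0,1,0,1,0,1,1,0,1,0,1,0] else if c = 7 then [0,1,1,0,1,1,0,1,0,1,0] else []) else if b = 3 then (if c = 4 then [1,0,1,1] else if c = 5 then [1,0,1,1,0,1,0,1,1,0] else if c = 6 then [1,1,0,1,0,1,0,1,1,0,1,0] else if c = 7 then [1,1,0,1,0,1,1,0,1,0,1,0,1] else []) else if b = 4 then (if c = 2 then [0] else if c = 3 then [1,0,1,1,0] else if c = 6 then [1,0,1,0,1,1,0,1,0,1,0] else if c = 7 then [1,1,0,1,1,0,1,0,1,0] else []) else if b = 5 then (if c = 2 then [0,1,0,1,1] else if c = 3 then [1,0,1,1,0,1,0,1,1] else if c = 6 then [0,1,1,0,1,0,1,0,1,1,0,1,0] else if c = 7 then [1,1,0,1,0,1,1,0,1,1,0,1] else []) else if b = 6 then (if c = 2 then [0,1,0,1,0,1,1,0,1,0,1] else if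 c = 3 then [1,1,0,1,0,1,0,1,1,0,1] else if c = 4 then [1,0,1,0,1,1,0,1,0,1] else if c = 5 then [0,1,1,0,1,0,1,0,1,1,0,1] else []) else if b = 7 then (if c = 2 then [0,1,1,0,1,1,0,1,0,1] else if c = 3 then [1,1,0,1,0,1,1,0,1,0,1,0,1,0] else if c = 4 then [1,1,0,1,1,0,1,0,1] else if c = 5 then [1,1,0,1,0,1,1,0,1,1,0,1,0] else []) else []) else if a = 2 then (if b = 1 then (if c = 4 then [0,1,0,1,1,0,1,0,1,0,1,1,0,1] else if c = 5 then [1,0,1,0,1,1,0,1] else if c = 6 then [1,1,0,1,0,1,1,0,1,1] else if c = 7 then [0,1,0,1,0,1,0,1,1,0,1,0,1] else []) else if b = 3 then (if c = 4 then [1,0,1,1,0,1,1,0,1,0] else if c = 5 then [1,0,1,1,0,1,0,1,0,1,0] else if c = 6 then [1,1,0,1,0,1] else if c = 7 then [0,1,0,1,1,0,1,1,0,1,0,1] else []) else if b = 4 then (if c = 1 then [0,1,0,1,1,0,1,0,1,0,1,1,0,1,0] else if c = 3 then [1,0,1,1,0,1,1,0,1] else if c = 5 then [0,1,1,0,1,1,0,1,0,1,1] else if c = 7 then [0,1,0,1,0,1,1] else []) else if b = 5 then (if c = 1 then [1,0,1,0,1,1,0,1,0] else if c = 3 then [1,0,1,1,0,1,0,1,0,1] else if c = 4 then [0,1,1,0,1,1,0,1,0,1,1,0] else if c = 6 then [0,1,1,0,1,1] else []) else if b = 6 then (if c = 1 then [1,1,0,1,0,1,1,0,1,1,0] else if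 c = 3 then [1,1,0,1,0,1,0] else if c = 5 then [0,1,1,0,1,1,0] else if c = 7 then [0,1,0] else []) else if b = 7 then (if c = 1 then [1,0,1,0,1,1,0,1,0,1,0,1,1] else if c = 3 then [0,1,0,1,1,0,1,1,0,1,0,1,0] else if c = 4 then [0,1,0,1,0,1,1,0] else if c = 6 then [0,1] else []) else []) else if a = 3 then (if b = 1 then (if c = 4 then [0,1,1,0,1,0,1,0,1,1] else if c = 5 then [1,1,0,1,1,0,1] else if c = 6 then [1,1,0,1,1,0,1,0,1,0,1,1,0] else if c = 7 then [1,0,1,0,1,0,1,1,0,1,1] else []) else if b = 2 then (if c = 4 then [0,1,1,0,1,0] else if c = 5 then [0,1,0,1,0,1,0] else if c = 6 then [0,1,0,1,0,1,1,0,1,1,0] else if c = 7 then [1,0,1,0,1,0,1] else []) else if b = 4 then (if c = 1 then [0,1,1,0,1,0,1,0,1,1,0] else if c = 2 then [0,1,1,0,1] else if c = 5 then [1,1,0,1,0,1,0,1,1,0,1,1] else if c = 6 then [1,0,1,1,0,1,0,1,0,1,1] else []) else if b = 5 then (if c = 1 then [1,1,0,1,1,0,1,0] else if c = 2 then [0,1,0,1,0,1] else if c = 4 then [1,1,0,1,0,1,0,1,1,0,1,1,0] else if c = 7 then [1,1,0,1,0,1,0,1,0] else []) else if b = 6 then (if c = 1 then [1,1,0,1,1,0,1,0,1,0,1,1] else if c = 2 then [0,1,0,1,0,1,1,0,1,1] else if c = 4 then [1,0,1,1,0,1,0,1,0,1,1,0] else if c = 7 then [1,0,1,1,0,1] else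 []) else if b = 7 then (if c = 1 then [1,0,1,0,1,0,1,1,0,1,1,0] else if c = 2 then [1,0,1,0,1,0,1,0] else if c = 5 then [1,1,0,1,0,1,0,1] else if c = 6 then [1,0,1,1,0,1,0] else []) else []) else if a = 4 then (if b = 1 then (if c = 2 then [1,0,1,1,0,1,0,1,0,1,1,0,1] else if c = 3 then [0,1,0,1,0,1,1,0,1] else if c = 6 then [1,1,0,1,0,1,1,0,1,0,1] else if c = 7 then [1,0,1,0,1,0,1,1,0,1,0,1] else []) else if b = 2 then (if c = 1 then [1,0,1,1,0,1,0,1,0,1,1,0,1,0] else if c = 3 then [1,1,0,1,1,0,1,0,1,1] else if c = 5 then [0,1,0,1,1,0,1,1,0,1] else if c = 7 then [1,0,1,0,1,1] else []) else if b = 3 then (if c = 1 then [0,1,0,1,0,1,1,0,1,0] else if c = 2 then [1,1,0,1,1,0,1,0,1,1,0] else if c = 5 then [0,1,0,1,1,0,1,0,1,0,1] else if c = 6 then [1,1,0,1,1] else []) else if b = 5 then (if c = 2 then [0,1,0,1,1,0,1,1,0,1,0] else if c = 3 then [0,1,0,1,1,0,1,0,1,0,1,0] else if c = 6 then [0,1,1,0,1,0,1] else if c = 7 then [1,0,1,1,0,1,1,0,1,0,1] else []) else if b = 6 then (if c = 1 then [1,1,0,1,0,1,1,0,1,0,1,0] else if c = 3 then [1,1,0,1,1,0] else if c = 5 then [0,1,1,0,1,0,1,0] else if c = 7 then [1,0] else []) else if b = 7 then (if c = 1 then [1,0,1,0,1,0,1,1,0,1,0,1,0] else if c = 2 then [1,0,1,0,1,1,0]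 else if c = 5 then [1,0,1,1,0,1,1,0,1,0,1,0] else if c = 6 then [1] else []) else []) else if a = 5 then (if b = 1 then (if c = 2 then [1,1,0,1,0,1,0,1,1] else if c = 3 then [0,1,1,0,1,1,0,1] else if c = 6 then [0,1,1,0,1,1,0,1,0,1,0,1,1,0] else if c = 7 then [0,1,0,1,0,1,0,1,1,0,1,1] else []) else if b = 2 then (if c = 1 then [1,1,0,1,0,1,0,1,1,0] else if c = 3 then [0,1,1,0,1,0,1,0,1,1,0,1,1] else if c = 4 then [1,1,0,1] else if c = 6 then [0,1,0,1,1,0,1,0,1,0,1,1] else []) else if b = 3 then (if c = 1 then [0,1,1,0,1,1,0,1,0] else if c = 2 then [0,1,1,0,1,0,1,0,1,1,0,1,1,0] else if c = 4 then [1,0,1,0,1] else if c = 7 then [0,1,1,0,1,0,1,0,1,0] else []) else if b = 4 then (if c = 2 then [1,1,0,1,0] else if c = 3 then [1,0,1,0,1,0] else if c = 6 then [1,0,1,0,1,1,0,1,1,0] else if c = 7 then [0,1,0,1,0,1,0,1] else []) else if b = 6 then (if c = 1 then [0,1,1,0,1,1,0,1,0,1,0,1,1] else if c = 2 then [0,1,0,1,1,0,1,0,1,0,1,1,0] else if c = 4 then [1,0,1,0,1,1,0,1,1] else if c = 7 then [0,1,0,1,1,0,1] else []) else if b = 7 then (if c = 1 then [0,1,0,1,0,1,0,1,1,0,1,1,0] else if c = 3 then [0,1,1,0,1,0,1,0,1] else if c = 4 then [1,1,0,1,1,0,1,1] else if c = 6 then [0,1,0,1,1,0,1,0] else []) else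 []) else if a = 6 then (if b = 1 then (if c = 2 then [1,0,1,1,0,1,0,1,0] else if c = 3 then [0,1,1,0] else if c = 4 then [0,1,0,1,1,0,1,0,1,0] else if c = 5 then [1,1,0] else []) else if b = 2 then (if c = 1 then [1,0,1,1,0,1,0,1] else if c = 3 then [1,0,1,0,1,1,0,1,0,1,0,1,0] else if c = 5 then [0,1,0,1,0,1,0,1,1,0,1] else if c = 7 then [1,0,1,0,1,1,0,1,1,0,1,0] else []) else if b = 3 then (if c = 1 then [0,1,1] else if c = 2 then [1,0,1,0,1,1,0,1,0,1,0,1] else if c = 4 then [1,0,1,0,1,0,1,1,0,1,0] else if c = 7 then [0,1,1,0,1,0,1,1,0] else []) else if b = 4 then (if c = 1 then [0,1,0,1,1,0,1,0,1] else if c = 3 then [1,0,1,0,1,0,1,1,0,1] else if c = 5 then [1,1,0,1,0,1,0,1,1,0,1,0,1] else if c = 7 then [0,1,0,1,0,1,1,0,1,1,0,1,0] else []) else if b = 5 then (if c = 1 then [1,1] else if c = 2 then [0,1,0,1,0,1,0,1,1,0,1,0] else if c = 4 then [0,1,0,1,0,1,1,0,1,0,1,0,1] else if c = 7 then [1,1,0,1,0,1,1,0] else []) else if b = 7 then (if c = 2 then [1,0,1,0,1,1,0,1,1,0,1] else if c = 3 then [0,1,1,0,1,0,1,1] else if c = 4 then [0,1,0,1,0,1,1,0,1,1,0,1] else if c = 5 then [1,1,0,1,0,1,1] else []) else []) else if a = 7 then (if b = 1 then (if c = 2 then [1,0,1,1,0,1,1,0] else if c = 3 then [0,1,0,1,0]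 else if c = 4 then [0,1,0,1,1,0,1,1,0] else if c = 5 then [1,0,1,0] else []) else if b = 2 then (if c = 1 then [1,0,1,1,0,1,1] else if c = 3 then [1,1,0,1,1,0,1,0,1,0,1] else if c = 4 then [1,1,0,1,0,1,1,0,1,0] else if c = 6 then [1,0,1,1,0,1,1,0,1,0,1,1,0] else []) else if b = 3 then (if c = 1 then [0,1,0,1] else if c = 2 then [1,1,0,1,1,0,1,0,1,0,1,0] else if c = 5 then [1,0,1,0,1,1,0,1,1,0,1,0,1] else if c = 6 then [0,1,0,1,0,1,0,1,1,0] else []) else if b = 4 then (if c = 1 then [0,1,0,1,1,0,1,1] else if c = 2 then [1,1,0,1,0,1,1,0,1] else if c = 5 then [0,1,1,0,1,1,0,1,0,1,0,1] else if c = 6 then [0,1,0,1,1,0,1,1,0,1,0,1,1,0] else []) else if b = 5 then (if c = 1 then [1,0,1] else if c = 3 then [1,0,1,0,1,1,0,1,1,0,1,0,1,0] else if c = 4 then [0,1,1,0,1,1,0,1,0,1,0,1,0] else if c = 6 then [1,0,1,0,1,0,1,1,0] else []) else if b = 6 then (if c = 2 then [1,0,1,1,0,1,1,0,1,0,1,1] else if c = 3 then [0,1,0,1,0,1,0,1,1] else if c = 4 then [0,1,0,1,1,0,1,1,0,1,0,1,1] else if c = 5 then [1,0,1,0,1,0,1,1] else []) else []) else [])"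

lemma L32_word_correct:
  assumes "is_basis a b c"
  shows "word_triple (L32_word a b c) = (a, b, c) \<and> set (L32_word a b c) \<subseteq> {0, 1}"
proof -
  have "a \<in> {1,2,3,4,5,6,7}" "b \<in> {1,2,3,4,5,6,7}" "c \<in> {1,2,3,4,5,6,7}"
    using assms unfolding is_basis_def set_1_7 by auto
  then show ?thesis using assms unfolding insert_iff empty_iff
    apply (elim disjE)
    apply (simp_all add: is_basis_def xor_table_def)
    apply (simp_all add: L32_word_def word_triple_def gen_triple_def lin_def xor_table_def)
    done
qed

lemma lin_triple_comp_triple:
  assumes "lin_triple s \<in> carrier L32" and "lin_triple t \<in> carrier L32"
  shows "lin_triple (comp_triple s t) = lin_triple s \<circ> lin_triple t"
proof -
  obtain x y z where t: "t = (x, y, z)" by (cases t) auto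
  have "lin_triple s \<circ> lin_triple t
      = lin ((lin_triple s \<circ> lin_triple t) 1) ((lin_triple s \<circ> lin_triple t) 2) ((lin_triple s \<circ> lin_triple t) 4)"
    by (rule L32_eq_lin[OF L32_comp[OF assms]])
  also have "\<dots> = lin_triple (comp_triple s t)"
    by (cases s) (simp add: t lin_def)
  finally show ?thesis by simp
qed

lemma word_induct:
  assumes "set w \<subseteq> {0, 1}" "R id" "R g1" "R g2"
    and comp: "\<And>p q. p \<in> carrier L32 \<Longrightarrow> q \<in> carrier L32 \<Longrightarrow> R p \<Longrightarrow> R q \<Longrightarrow> R (p \<circ> q)"
  shows "lin_triple (word_triple w) \<in> carrier L32 \<and> R (lin_triple (word_triple w))"
  using assms(1)
proof (induction w)
  case Nil
  have "lin_triple (word_triple []) = id"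
    by (auto simp: word_triple_def fun_eq_iff lin_def xor_table_def)
  then show ?case using L32_id assms(2) by metis
next
  case (Cons i w)
  then have IH: "lin_triple (word_triple w) \<in> carrier L32" "R (lin_triple (word_triple w))" by auto
  have g: "lin_triple (gen_triple i) \<in> carrier L32" "R (lin_triple (gen_triple i))"
    using assms(3,4) g1_in_L32 g2_in_L32 by (auto simp: gen_triple_def g1_def g2_def)
  have "lin_triple (word_triple (i # w)) = lin_triple (gen_triple i) \<circ> lin_triple (word_triple w)"
    using lin_triple_comp_triple[OF g(1) IH(1)] by (simp add: word_triple_def)
  then show ?case using L32_comp[OF g(1) IH(1)] comp[OF g(1) IH(1) g(2) IH(2)] by metis
qed

lemma lin_in_L32: assumes "is_basis a b c" shows "lin a b c \<in> carrier L32"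
  using word_induct[of "L32_word a b c" "\<lambda>_. True"] L32_word_correct[OF assms] by simp

lemma L32_induct [consumes 1, case_names id g1 g2 comp]:
  assumes "p \<in> carrier L32" "R id" "R g1" "R g2"
    and "\<And>p q. p \<in> carrier L32 \<Longrightarrow> q \<in> carrier L32 \<Longrightarrow> R p \<Longrightarrow> R q \<Longrightarrow> R (p \<circ> q)"
  shows "R p"
proof -
  have w: "is_basis (p 1) (p 2) (p 4)" by (rule L32_is_basis[OF assms(1)])
  have "p = lin_triple (word_triple (L32_word (p 1) (p 2) (p 4)))"
    using L32_word_correct[OF w] L32_eq_lin[OF assms(1)] by simp
  moreover have "R (lin_triple (word_triple (L32_word (p 1) (p 2) (p 4))))"
    using word_induct[of _ R] L32_word_correct[OF w] assms(2-5) by blast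
  ultimately show ?thesis by simp
qed

section \<open>The embedding of L3(2) into M22\<close>

fun index_of :: "nat list \<Rightarrow> nat \<Rightarrow> nat" where
  "index_of [] x = 0"
| "index_of (y # ys) x = (if y = x then 0 else Suc (index_of ys x))"

lemma index_of_in: "x \<in> set xs \<Longrightarrow> index_of xs x < length xs \<and> xs ! index_of xs x = x"
  by (induction xs) auto

lemma index_of_nth: "distinct xs \<Longrightarrow> i < length xs \<Longrightarrow> index_of xs (xs ! i) = i"
proof (induction xs arbitrary: i)
  case (Cons y ys) then show ?case by (cases i) auto
qed simp

lemma sort_eq_if_mset_eq: "mset xs = mset ys \<Longrightarrow> sort xs = sort ys"
  by (metis mset_sort properties_for_sort sorted_sort)

lemma sort_map_sort: "sort (map f (sort xs)) = sort (map f xs)"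
  by (rule sort_eq_if_mset_eq) simp

definition orbit1 :: "nat list" where "orbit1 = [8,16,7,12,20,18,5]"

definition orbit2 :: "nat list" where "orbit2 = [10,14,2,22,4,17,9]"

definition orbit3 :: "nat list" where "orbit3 = [13,15,21,1,19,6,3,11]"

lemma orbit_facts: "length orbit1 = 7" "length orbit2 = 7" "length orbit3 = 8"
  "distinct orbit1" "distinct orbit2" "distinct orbit3"
  "set orbit1 \<inter> set orbit2 = {}" "set orbit1 \<inter> set orbit3 = {}" "set orbit2 \<inter> set orbit3 = {}"
  by (simp_all add: orbit1_def orbit2_def orbit3_def)

text \<open>The eight Fano planes on \<open>{1..7}\<close> that share no line with the standard plane, whose lines
  are the sets \<open>{x, y, x xor y}\<close>; L3(2) permutes them. Lines and planes are sorted lists.\<close>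
definition fano_planes :: "nat list list list" where "fano_planes = [[[1,2,4], [1,3,6], [1,5,7], [2,3,7], [2,5,6], [3,4,5], [4,6,7]], [[1,2,4], [1,3,7], [1,5,6], [2,3,5], [2,6,7], [3,4,6], [4,5,7]], [[1,2,5], [1,3,6], [1,4,7], [2,3,4], [2,6,7], [3,5,7], [4,5,6]], [[1,2,5], [1,3,7], [1,4,6], [2,3,6], [2,4,7], [3,4,5], [5,6,7]], [[1,2,6], [1,3,4], [1,5,7], [2,3,5], [2,4,7], [3,6,7], [4,5,6]], [[1,2,6], [1,3,5], [1,4,7], [2,3,7], [2,4,5], [3,4,6], [5,6,7]], [[1,2,7], [1,3,4], [1,5,6], [2,3,6], [2,4,5], [3,5,7], [4,6,7]], [[1,2,7], [1,3,5], [1,4,6], [2,3,4], [2,5,6], [3,6,7], [4,5,7]]]"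

definition plane_image :: "(nat \<Rightarrow> nat) \<Rightarrow> nat list list \<Rightarrow> nat list list" where
  "plane_image p F = sort (map (\<lambda>l. sort (map p l)) F)"

definition permutes_planes :: "(nat \<Rightarrow> nat) \<Rightarrow> bool" where
  "permutes_planes p \<longleftrightarrow> (\<forall>i<8. \<exists>j<8. plane_image p (fano_planes ! i) = fano_planes ! j)"

definition plane_perm :: "(nat \<Rightarrow> nat) \<Rightarrow> nat \<Rightarrow> nat" where
  "plane_perm p i = (THE j. j < 8 \<and> plane_image p (fano_planes ! i) = fano_planes ! j)"

text \<open>The i-th points of \<open>orbit1\<close> and \<open>orbit2\<close> stand for the vector i, those of \<open>orbit3\<close> for the
  i-th Fano plane.\<close>
definition embed :: "(nat \<Rightarrow> nat) \<Rightarrow> nat \<Rightarrow> nat" where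
  "embed p x = (if x \<in> set orbit1 then orbit1 ! (p (Suc (index_of orbit1 x)) - 1)
     else if x \<in> set orbit2 then orbit2 ! (p (Suc (index_of orbit2 x)) - 1)
     else if x \<in> set orbit3 then orbit3 ! plane_perm p (index_of orbit3 x) else x)"

lemma fano_planes_facts: "length fano_planes = 8" "distinct fano_planes"
  "list_all (\<lambda>F. plane_image id F = F) fano_planes"
  by (simp_all add: fano_planes_def plane_image_def)

lemma plane_image_comp: "plane_image (p \<circ> q) F = plane_image p (plane_image q F)"
proof -
  have "sort (map p (sort (map q l))) = sort (map (p \<circ> q) l)" for l
    by (simp add: sort_map_sort)
  then show ?thesis unfolding plane_image_def by (simp add: sort_map_sort comp_def)
qed

lemma plane_image_id: "i < 8 \<Longrightarrow> plane_image id (fano_planes ! i) = fano_planes ! i"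
  using fano_planes_facts by (auto simp: list_all_iff)

lemma plane_perm_eq: "j < 8 \<Longrightarrow> plane_image p (fano_planes ! i) = fano_planes ! j \<Longrightarrow> plane_perm p i = j"
  unfolding plane_perm_def using fano_planes_facts(1,2)
  by (intro the_equality) (auto simp: nth_eq_iff_index_eq)

lemma permutes_planes_plane_perm:
  "permutes_planes p \<Longrightarrow> i < 8 \<Longrightarrow> plane_perm p i < 8 \<and> plane_image p (fano_planes ! i) = fano_planes ! plane_perm p i"
  unfolding permutes_planes_def using plane_perm_eq by metis

lemma plane_perm_comp:
  assumes "permutes_planes p" "permutes_planes q" "i < 8"
  shows "plane_perm (p \<circ> q) i = plane_perm p (plane_perm q i)"
  using permutes_planes_plane_perm[OF assms(2,3)] permutes_planes_plane_perm[OF assms(1)]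
    plane_perm_eq plane_image_comp by metis

lemma plane_perm_id: "i < 8 \<Longrightarrow> plane_perm id i = i"
  using plane_perm_eq plane_image_id by blast

lemma lt_8_iff: "(i::nat) < 8 \<longleftrightarrow> i \<in> {0,1,2,3,4,5,6,7}"
  by auto

definition plane_perm_g1 :: "nat list" where "plane_perm_g1 = [1,0,6,4,3,7,2,5]"

definition plane_perm_g2 :: "nat list" where "plane_perm_g2 = [6,0,4,3,5,2,1,7]"

lemma plane_image_g1: "\<forall>i\<in>{0,1,2,3,4,5,6,7}. plane_image g1 (fano_planes ! i) = fano_planes ! (plane_perm_g1 ! i)"
  and plane_image_g2: "\<forall>i\<in>{0,1,2,3,4,5,6,7}. plane_image g2 (fano_planes ! i) = fano_planes ! (plane_perm_g2 ! i)"
  and plane_perm_g_bound: "\<forall>i\<in>{0,1,2,3,4,5,6,7}. plane_perm_g1 ! i < 8 \<and> plane_perm_g2 ! i < 8"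
  by (simp_all add: g1_def g2_def plane_image_def fano_planes_def plane_perm_g1_def plane_perm_g2_def
      lin_def xor_table_def)

lemma plane_perm_g1: "i < 8 \<Longrightarrow> plane_perm g1 i = plane_perm_g1 ! i"
  and plane_perm_g2: "i < 8 \<Longrightarrow> plane_perm g2 i = plane_perm_g2 ! i"
  using plane_perm_eq plane_image_g1 plane_image_g2 plane_perm_g_bound lt_8_iff by metis+

lemma L32_permutes_planes: "p \<in> carrier L32 \<Longrightarrow> permutes_planes p"
proof (induction rule: L32_induct)
  case id then show ?case using plane_image_id by (auto simp: permutes_planes_def id_def)
next
  case g1 then show ?case
    unfolding permutes_planes_def by (metis plane_image_g1 plane_perm_g_bound lt_8_iff)
next
  case g2 then show ?case
    unfolding permutes_planes_def by (metis plane_image_g2 plane_perm_g_bound lt_8_iff)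
next
  case (comp p q) then show ?case unfolding permutes_planes_def using plane_image_comp by metis
qed

lemma embed_orbit1: "x \<in> set orbit1 \<Longrightarrow> embed p x = orbit1 ! (p (Suc (index_of orbit1 x)) - 1)"
  by (simp add: embed_def)

lemma embed_orbit2: "x \<in> set orbit2 \<Longrightarrow> embed p x = orbit2 ! (p (Suc (index_of orbit2 x)) - 1)"
  using orbit_facts by (auto simp: embed_def)

lemma embed_orbit3: "x \<in> set orbit3 \<Longrightarrow> embed p x = orbit3 ! plane_perm p (index_of orbit3 x)"
  using orbit_facts by (auto simp: embed_def)

lemma embed_fixes: "x \<notin> set orbit1 \<Longrightarrow> x \<notin> set orbit2 \<Longrightarrow> x \<notin> set orbit3 \<Longrightarrow> embed p x = x"
  by (simp add: embed_def)

lemma embed_fixes_outside: "x \<notin> {1..23} \<Longrightarrow> embed p x = x"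
  by (rule embed_fixes) (auto simp: orbit1_def orbit2_def orbit3_def)

lemma orbit7_step:
  assumes E: "length E = 7" "distinct E" and p: "p \<in> carrier L32" and x: "x \<in> set E"
  shows "E ! (p (Suc (index_of E x)) - 1) \<in> set E
    \<and> Suc (index_of E (E ! (p (Suc (index_of E x)) - 1))) = p (Suc (index_of E x))"
proof -
  have "Suc (index_of E x) \<in> {1..7}" using index_of_in[OF x] E by auto
  then have r: "p (Suc (index_of E x)) \<in> {1..7}" using L32_in_1_7[OF p] by blast
  then have i: "p (Suc (index_of E x)) - 1 < length E" using E by auto
  show ?thesis using index_of_nth[OF E(2) i] i r by auto
qed

lemma embed_comp:
  assumes p: "p \<in> carrier L32" and q: "q \<in> carrier L32"
  shows "embed (p \<circ> q) = embed p \<circ> embed q"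
proof
  fix x
  consider "x \<in> set orbit1" | "x \<in> set orbit2" | "x \<in> set orbit3"
    | "x \<notin> set orbit1" "x \<notin> set orbit2" "x \<notin> set orbit3" by blast
  then show "embed (p \<circ> q) x = (embed p \<circ> embed q) x"
  proof cases
    case 1
    then show ?thesis using orbit7_step[OF orbit_facts(1,4) q 1] by (simp add: embed_orbit1)
  next
    case 2
    then show ?thesis using orbit7_step[OF orbit_facts(2,5) q 2] by (simp add: embed_orbit2)
  next
    case 3
    have pp: "permutes_planes p" "permutes_planes q" using p q by (simp_all add: L32_permutes_planes)
    have ix: "index_of orbit3 x < 8" using index_of_in[OF 3] orbit_facts by simp
    then have r: "plane_perm q (index_of orbit3 x) < 8" using permutes_planes_plane_perm[OF pp(2)] by simp
    then have "orbit3 ! plane_perm q (index_of orbit3 x) \<in> set orbit3"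
      and "index_of orbit3 (orbit3 ! plane_perm q (index_of orbit3 x)) = plane_perm q (index_of orbit3 x)"
      using index_of_nth[OF orbit_facts(6)] orbit_facts by simp_all
    then show ?thesis using 3 plane_perm_comp[OF pp ix] by (simp add: embed_orbit3)
  qed (simp add: embed_fixes)
qed

lemma embed_id: "embed id = id"
proof
  fix x
  consider "x \<in> set orbit1" | "x \<in> set orbit2" | "x \<in> set orbit3"
    | "x \<notin> set orbit1" "x \<notin> set orbit2" "x \<notin> set orbit3" by blast
  then show "embed id x = id x"
  proof cases
    case 3
    then have "index_of orbit3 x < 8" using index_of_in[OF 3] orbit_facts by simp
    then show ?thesis using 3 index_of_in[OF 3] by (simp add: embed_orbit3 plane_perm_id)
  qed (use index_of_in in \<open>simp_all add: embed_orbit1 embed_orbit2 embed_fixes\<close>)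
qed

lemma embed_inj:
  assumes p: "p \<in> carrier L32" and q: "q \<in> carrier L32" and e: "embed p = embed q"
  shows "p = q"
proof -
  have "p v = q v" if v: "v \<in> {1..7}" for v
  proof -
    have i: "v - 1 < length orbit1" using v orbit_facts by auto
    have s: "Suc (index_of orbit1 (orbit1 ! (v - 1))) = v" using index_of_nth[OF orbit_facts(4) i] v by auto
    have "orbit1 ! (p v - 1) = orbit1 ! (q v - 1)"
      using fun_cong[OF e, of "orbit1 ! (v - 1)"] i s by (simp add: embed_orbit1)
    moreover have "p v - 1 < length orbit1" "q v - 1 < length orbit1"
      using L32_in_1_7[OF p v] L32_in_1_7[OF q v] orbit_facts by auto
    ultimately have "p v - 1 = q v - 1" using orbit_facts(4) nth_eq_iff_index_eq by blast
    then show ?thesis using L32_in_1_7[OF p v] L32_in_1_7[OF q v] by auto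
  qed
  then have "p 1 = q 1" "p 2 = q 2" "p 4 = q 4" by auto
  then show ?thesis using L32_eq_lin[OF p] L32_eq_lin[OF q] by metis
qed

definition embed_g1_list :: "nat list" where "embed_g1_list = [19,4,21,2,5,11,20,8,9,10,6,16,15,22,13,12,17,18,1,7,3,14,23]"

definition embed_g2_list :: "nat list" where "embed_g2_list = [1,2,15,14,20,21,7,12,4,22,11,18,3,9,13,5,10,8,6,16,19,17,23]"

lemma g1_apply: "g1 v = lin 1 4 2 v" and g2_apply: "g2 v = lin 4 7 6 v"
  by (simp_all add: g1_def g2_def)

lemma embed_g1: "embed g1 = perm_of_list embed_g1_list"
proof (rule perm_of_list_eqI)
  show "map (embed g1) (id_list 23) = embed_g1_list"
    by (simp add: embed_def id_list_23 embed_g1_list_def orbit1_def orbit2_def orbit3_def g1_apply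
        lin_def xor_table_def plane_perm_g1 plane_perm_g1_def)
qed (rule embed_fixes_outside)

lemma embed_g2: "embed g2 = perm_of_list embed_g2_list"
proof (rule perm_of_list_eqI)
  show "map (embed g2) (id_list 23) = embed_g2_list"
    by (simp add: embed_def id_list_23 embed_g2_list_def orbit1_def orbit2_def orbit3_def g2_apply
        lin_def xor_table_def plane_perm_g2 plane_perm_g2_def)
qed (rule embed_fixes_outside)

lemma embed_g_words:
  "eval_word 23 schreier_table [1,2,8,21] = embed_g1_list"
  "eval_word 23 schreier_table [11,4,5,1] = embed_g2_list"
  by code_simp+

lemma schreier_word_in_M22:
  assumes "set w \<subseteq> {..<23}"
  shows "perm_of_list (eval_word 23 schreier_table w) \<in> carrier M22"
proof -
  have "perm_of_list (schreier_table ! i) \<in> carrier M22 \<and> length (schreier_table ! i) = 23"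
    if "i \<in> set w" for i
    using that assms schreier_table schreier_in_M22 schreier_table_lengths by auto
  then show ?thesis using eval_word_in[of w schreier_table "carrier M22" 23] M22_comp M22_id by blast
qed

lemma embed_in_M22: "p \<in> carrier L32 \<Longrightarrow> embed p \<in> carrier M22"
proof (induction rule: L32_induct)
  case id then show ?case using M22_id embed_id by (simp add: id_def)
next
  case g1
  have "set [1, 2, 8, 21] \<subseteq> {..<23::nat}" by simp
  then show ?case using schreier_word_in_M22 embed_g_words(1) embed_g1 by metis
next
  case g2
  have "set [11, 4, 5, 1] \<subseteq> {..<23::nat}" by simp
  then show ?case using schreier_word_in_M22 embed_g_words(2) embed_g2 by metis
next
  case (comp p q) then show ?case using embed_comp M22_comp by metis
qed

definition embedded_L32 :: "(nat \<Rightarrow> nat) set" where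
  "embedded_L32 = embed ` carrier L32"

lemma embed_hom: "embed \<in> hom L32 M22"
  by (rule homI) (simp_all add: embed_in_M22 embed_comp)

lemma embedded_L32_subgroup: "subgroup embedded_L32 M22"
  unfolding embedded_L32_def
  by (rule group_hom.img_is_subgroup) (simp add: group_hom_def group_hom_axioms_def L32_group M22_group embed_hom)

lemma embed_iso: "embed \<in> iso L32 (M22\<lparr>carrier := embedded_L32\<rparr>)"
proof -
  have "embed \<in> hom L32 (M22\<lparr>carrier := embedded_L32\<rparr>)"
    by (rule homI) (auto simp: embedded_L32_def embed_comp)
  moreover have "bij_betw embed (carrier L32) embedded_L32"
    unfolding embedded_L32_def bij_betw_def inj_on_def using embed_inj by blast
  ultimately show ?thesis by (simp add: iso_def)
qed

section \<open>The involutions and the action on oriented lines\<close>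

definition is_flag :: "nat \<Rightarrow> nat \<Rightarrow> bool" where
  "is_flag a b \<longleftrightarrow> a \<in> {1..7} \<and> b \<in> {1..7} \<and> a \<noteq> b"

text \<open>Index of the oriented line through the flag (a, b); the flags (a, b), (b, a + b) and
  (a + b, a) get the same index.\<close>
definition line_index :: "nat \<Rightarrow> nat \<Rightarrow> nat" where
  "line_index a b = (if a = 1 then (if b = 2 then 0 else if b = 3 then 1 else if b = 4 then 2 else if b = 5 then 3 else if b = 6 then 4 else if b = 7 then 5 else 0) else if a = 2 then (if b = 1 then 1 else if b = 3 then 0 else if b = 4 then 6 else if b = 5 then 7 else if b = 6 then 8 else if b = 7 then 9 else 0) else if a = 3 then (if b = 1 then 0 else if b = 2 then 1 else if b = 4 then 10 else if b = 5 then 11 else if b = 6 then 12 else if b = 7 then 13 else 0) else if a = 4 then (if b = 1 then 3 else if b = 2 then 8 else if b = 3 then 13 else if b = 5 then 2 else if b = 6 then 6 else if b = 7 then 10 else 0) else if a = 5 then (if b = 1 then 2 else if b = 2 then 9 else if b = 3 then 12 else if b = 4 then 3 else if b = 6 then 11 else if b = 7 then 7 else 0) else if a = 6 then (if b = 1 then 5 else if b = 2 then 6 else if b = 3 then 11 else if b = 4 then 8 else if b = 5 then 12 else if b = 7 then 4 else 0) else if a = 7 then (if b = 1 then 4 else if b = 2 then 7 else if b = 3 then 10 else if b = 4 then 13 else if b = 5 then 9 else if b = 6 then 5 else 0) else 0)"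

definition line_bases :: "(nat \<times> nat \<times> nat) list" where
  "line_bases = [(1,2,4), (1,3,4), (1,4,2), (1,5,2), (1,6,2), (1,7,2), (2,4,1), (2,5,1), (2,6,1), (2,7,1), (3,4,1), (3,5,1), (3,6,1), (3,7,1)]"

fun rotated_flag :: "nat \<times> nat \<Rightarrow> nat \<times> nat \<Rightarrow> bool" where
  "rotated_flag u (x, y) \<longleftrightarrow> u = (x, y) \<or> u = (y, xor_table x y) \<or> u = (xor_table x y, x)"

definition line_of :: "(nat \<Rightarrow> nat) \<Rightarrow> nat" where
  "line_of p = line_index (p 1) (p 2)"

lemma line_index_rotate:
  assumes "is_flag a b"
  shows "line_index b (xor_table a b) = line_index a b \<and> line_index (xor_table a b) a = line_index a b
    \<and> line_index a b < 14"
proof -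
  have "\<forall>a\<in>{1,2,3,4,5,6,7}. \<forall>b\<in>{1,2,3,4,5,6,7}. a \<noteq> b \<longrightarrow>
      line_index b (xor_table a b) = line_index a b \<and> line_index (xor_table a b) a = line_index a b
      \<and> line_index a b < 14"
    by (simp add: line_index_def xor_table_def)
  then show ?thesis using assms unfolding is_flag_def set_1_7 by blast
qed

lemma line_index_rep:
  assumes "is_flag a b"
  shows "case line_bases ! line_index a b of (x, y, _) \<Rightarrow> rotated_flag (a, b) (x, y) \<and> x \<in> {0..7} \<and> y \<in> {0..7}"
  using assms unfolding is_flag_def set_1_7 insert_iff empty_iff
  by (elim conjE disjE; simp add: line_bases_def line_index_def xor_table_def)

lemma xor_table_cancel:
  assumes "x \<in> {0..7}" "y \<in> {0..7}"
  shows "xor_table y (xor_table x y) = x \<and> xor_table (xor_table x y) x = y"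
proof -
  have all: "\<forall>x\<in>{0,1,2,3,4,5,6,7::nat}. \<forall>y\<in>{0,1,2,3,4,5,6,7::nat}.
      xor_table y (xor_table x y) = x \<and> xor_table (xor_table x y) x = y"
    by (simp add: xor_table_def)
  show ?thesis using assms unfolding set_0_7 by (rule all[rule_format])
qed

lemma line_index_eq_imp_rotated:
  assumes "is_flag a b" "is_flag c d" "line_index c d = line_index a b"
  shows "(c, d) = (a, b) \<or> (c, d) = (b, xor_table a b) \<or> (c, d) = (xor_table a b, a)"
proof -
  obtain x y z where r: "line_bases ! line_index a b = (x, y, z)" by (cases "line_bases ! line_index a b") auto
  have "rotated_flag (a, b) (x, y)" "rotated_flag (c, d) (x, y)" "x \<in> {0..7}" "y \<in> {0..7}"
    using line_index_rep[OF assms(1)] line_index_rep[OF assms(2)] r assms(3) by auto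
  then show ?thesis using xor_table_cancel[of x y] by auto
qed

lemma L32_is_flag: "p \<in> carrier L32 \<Longrightarrow> is_flag (p 1) (p 2)"
  using L32_is_basis by (simp add: is_basis_def is_flag_def)

lemma line_of_less: "p \<in> carrier L32 \<Longrightarrow> line_of p < 14"
  using line_index_rotate L32_is_flag unfolding line_of_def by blast

definition involution_table :: "nat list list" where "involution_table = [
  [22,2,20,13,21,12,7,8,19,10,17,6,4,14,18,16,11,15,9,3,5,1,23],
  [12,2,4,3,19,22,7,8,21,10,18,1,20,14,17,16,15,11,5,13,9,6,23],
  [9,15,5,4,3,17,21,8,1,10,16,12,18,19,2,11,6,13,14,20,7,22,23],
  [5,21,9,4,1,18,15,8,3,10,14,12,17,11,7,19,13,6,16,20,2,22,23],
  [16,6,7,11,5,2,3,8,9,10,4,19,14,13,22,1,17,18,12,21,20,15,23],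
  [14,3,2,21,5,7,6,8,9,10,20,15,16,1,12,13,17,18,22,11,4,19,23],
  [4,13,8,1,11,9,19,3,6,21,5,12,2,14,20,16,17,18,7,15,10,22,23],
  [2,1,17,4,5,8,11,6,9,15,7,21,22,14,10,16,3,19,18,20,12,13,23],
  [20,19,10,15,6,5,13,21,11,3,9,12,7,14,4,16,17,18,2,1,8,22,23],
  [7,11,18,4,5,10,1,15,9,6,2,13,12,14,8,16,19,3,17,20,22,21,23],
  [17,2,14,6,5,4,7,13,9,11,10,12,8,3,16,15,1,21,20,19,18,22,23],
  [8,2,22,4,15,14,7,1,13,19,12,11,9,6,5,21,17,18,10,20,16,3,23],
  [10,2,12,4,13,16,7,19,15,1,22,3,5,21,9,6,17,18,8,20,14,11,23],
  [18,2,16,19,5,20,7,11,9,13,8,12,10,15,14,3,21,1,4,6,17,22,23]]"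

definition invol :: "nat \<Rightarrow> nat \<Rightarrow> nat" where
  "invol i = perm_of_list (involution_table ! i)"

lemma involution_table_facts: "length involution_table = 14" "distinct involution_table"
  "list_all (\<lambda>l. length l = 23 \<and> comp_list l l = id_list 23 \<and> l \<noteq> id_list 23) involution_table"
  by code_simp+

lemma involution_table_length: "i < 14 \<Longrightarrow> length (involution_table ! i) = 23"
  using involution_table_facts(1,3) by (simp add: list_all_length)

definition involution_words :: "nat list list" where
  "involution_words = [[18,6,8,2], [21,6,7,0], [7,9,3,1,1], [11,22,5,5,1], [15,0,7,19], [17,20,6,16,7],
    [15,7,2,0,0], [22,18,1,4,0], [10,14,22,0], [9,14,14,6], [2,21,6,9,0], [4,19,0,1], [10,9,5,5],
    [8,14,20,12,0]]"

lemma involution_words: "list_all (\<lambda>i. set (involution_words ! i) \<subseteq> {..<23}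
    \<and> eval_word 23 schreier_table (involution_words ! i) = involution_table ! i) [0..<14]"
  by code_simp

lemma invol_in_M22: assumes "i < 14" shows "invol i \<in> carrier M22"
proof -
  have "set (involution_words ! i) \<subseteq> {..<23}"
    "eval_word 23 schreier_table (involution_words ! i) = involution_table ! i"
    using involution_words assms by (simp_all add: list_all_iff)
  then show ?thesis using schreier_word_in_M22 by (metis invol_def)
qed

lemma invol_involution: assumes "i < 14" shows "invol i \<circ> invol i = id" "invol i \<noteq> id"
proof -
  let ?l = "involution_table ! i"
  have l: "length ?l = 23" "comp_list ?l ?l = id_list 23" "?l \<noteq> id_list 23"
    using involution_table_facts(1,3) assms by (simp_all add: list_all_length)
  show "invol i \<circ> invol i = id"
    using perm_of_list_comp_list[of ?l ?l] l by (simp add: invol_def)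
  show "invol i \<noteq> id"
    using perm_of_list_inj[of ?l "id_list 23"] l by (auto simp: invol_def)
qed

lemma invol_inj: "inj_on invol {..<14}"
proof (rule inj_onI)
  fix i j assume i: "i \<in> {..<14::nat}" and j: "j \<in> {..<14::nat}" and e: "invol i = invol j"
  have "involution_table ! i = involution_table ! j"
    using perm_of_list_inj e involution_table_length i j by (simp add: invol_def)
  moreover have "i < length involution_table" "j < length involution_table"
    using i j involution_table_facts(1) by auto
  ultimately show "i = j" using nth_eq_iff_index_eq[OF involution_table_facts(2)] by blast
qed

definition conj_permutes_lines :: "(nat \<Rightarrow> nat) \<Rightarrow> bool" where
  "conj_permutes_lines p \<longleftrightarrow>
     (\<forall>q\<in>carrier L32. invol (line_of (p \<circ> q)) \<circ> embed p = embed p \<circ> invol (line_of q))"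

definition line_perm_g1 :: "nat list" where "line_perm_g1 = [2,3,0,1,4,5,8,13,6,10,9,12,11,7]"

definition line_perm_g2 :: "nat list" where "line_perm_g2 = [10,13,6,8,3,2,5,7,4,9,12,1,0,11]"

lemma line_index_g:
  assumes "is_flag a b"
  shows "line_index (lin 1 4 2 a) (lin 1 4 2 b) = line_perm_g1 ! line_index a b
    \<and> line_index (lin 4 7 6 a) (lin 4 7 6 b) = line_perm_g2 ! line_index a b"
  using assms unfolding is_flag_def set_1_7 insert_iff empty_iff
  by (elim conjE disjE; simp add: lin_def line_index_def xor_table_def line_perm_g1_def line_perm_g2_def)

lemma invol_conj_g:
  "list_all (\<lambda>i. comp_list (involution_table ! (line_perm_g1 ! i)) embed_g1_list
     = comp_list embed_g1_list (involution_table ! i)) [0..<14]"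
  "list_all (\<lambda>i. comp_list (involution_table ! (line_perm_g2 ! i)) embed_g2_list
     = comp_list embed_g2_list (involution_table ! i)) [0..<14]"
  by code_simp+

lemma conj_permutes_lines_lin:
  assumes g: "g = lin a b c" "g \<in> carrier L32" "embed g = perm_of_list P" "length P = 23"
    and conj: "list_all (\<lambda>i. comp_list (involution_table ! (perm ! i)) P
                = comp_list P (involution_table ! i)) [0..<14]"
    and lines: "\<And>x y. is_flag x y \<Longrightarrow> line_index (lin a b c x) (lin a b c y) = perm ! line_index x y"
  shows "conj_permutes_lines g"
  unfolding conj_permutes_lines_def
proof
  fix q assume q: "q \<in> carrier L32"
  have l: "line_of q < 14" and l': "line_of (g \<circ> q) < 14"
    using line_of_less q L32_comp[OF g(2) q] by auto
  have "line_of (g \<circ> q) = perm ! line_of q"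
    using lines[OF L32_is_flag[OF q]] by (simp add: line_of_def g(1))
  then have "comp_list (involution_table ! line_of (g \<circ> q)) P = comp_list P (involution_table ! line_of q)"
    using conj l by (simp add: list_all_iff)
  then show "invol (line_of (g \<circ> q)) \<circ> embed g = embed g \<circ> invol (line_of q)"
    using perm_of_list_comp_list involution_table_length[OF l] involution_table_length[OF l'] g(3,4)
    by (metis invol_def)
qed

lemma conj_permutes_lines_g1: "conj_permutes_lines g1"
proof (rule conj_permutes_lines_lin[OF g1_def g1_in_L32 embed_g1 _ invol_conj_g(1)])
  show "length embed_g1_list = 23" by (simp add: embed_g1_list_def)
qed (use line_index_g in blast)

lemma conj_permutes_lines_g2: "conj_permutes_lines g2"
proof (rule conj_permutes_lines_lin[OF g2_def g2_in_L32 embed_g2 _ invol_conj_g(2)])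
  show "length embed_g2_list = 23" by (simp add: embed_g2_list_def)
qed (use line_index_g in blast)

lemma conj_permutes_lines_id: "conj_permutes_lines id"
  by (simp add: conj_permutes_lines_def embed_id)

lemma conj_permutes_lines_comp:
  assumes "p \<in> carrier L32" "q \<in> carrier L32" "conj_permutes_lines p" "conj_permutes_lines q"
  shows "conj_permutes_lines (p \<circ> q)"
  unfolding conj_permutes_lines_def
proof
  fix r assume r: "r \<in> carrier L32"
  have qr: "q \<circ> r \<in> carrier L32" using L32_comp[OF assms(2) r] .
  have p: "invol (line_of (p \<circ> (q \<circ> r))) \<circ> embed p = embed p \<circ> invol (line_of (q \<circ> r))"
    using assms(3) qr by (simp add: conj_permutes_lines_def)
  have q: "invol (line_of (q \<circ> r)) \<circ> embed q = embed q \<circ> invol (line_of r)"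
    using assms(4) r by (simp add: conj_permutes_lines_def)
  have "invol (line_of (p \<circ> q \<circ> r)) \<circ> embed (p \<circ> q)
      = (invol (line_of (p \<circ> (q \<circ> r))) \<circ> embed p) \<circ> embed q"
    by (simp add: embed_comp[OF assms(1,2)] comp_assoc)
  also have "\<dots> = embed p \<circ> (invol (line_of (q \<circ> r)) \<circ> embed q)" by (simp add: p comp_assoc)
  also have "\<dots> = embed (p \<circ> q) \<circ> invol (line_of r)" by (simp add: q embed_comp[OF assms(1,2)] comp_assoc)
  finally show "invol (line_of (p \<circ> q \<circ> r)) \<circ> embed (p \<circ> q) = embed (p \<circ> q) \<circ> invol (line_of r)" .
qed

lemma L32_conj_permutes_lines: assumes "p \<in> carrier L32" shows "conj_permutes_lines p"
  using assms conj_permutes_lines_id conj_permutes_lines_g1 conj_permutes_lines_g2 conj_permutes_lines_comp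
  by (rule L32_induct)

lemma embed_conj_invol:
  assumes g: "g \<in> carrier L32" and x: "x \<in> carrier L32"
  shows "embed g \<circ> invol (line_of x) \<circ> inv\<^bsub>M22\<^esub> (embed g) = invol (line_of (g \<circ> x))"
proof -
  interpret M22: group M22 by (rule M22_group)
  have g': "embed g \<in> carrier M22" using embed_in_M22[OF g] .
  have t: "invol (line_of (g \<circ> x)) \<in> carrier M22"
    using invol_in_M22 line_of_less[OF L32_comp[OF g x]] .
  have "invol (line_of (g \<circ> x)) = invol (line_of (g \<circ> x)) \<circ> (embed g \<circ> inv\<^bsub>M22\<^esub> (embed g))"
    using M22.r_inv[OF g'] M22.r_one[OF t] by simp
  also have "\<dots> = (invol (line_of (g \<circ> x)) \<circ> embed g) \<circ> inv\<^bsub>M22\<^esub> (embed g)"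
    by (simp add: comp_assoc)
  also have "\<dots> = embed g \<circ> invol (line_of x) \<circ> inv\<^bsub>M22\<^esub> (embed g)"
    using L32_conj_permutes_lines[OF g] x by (simp add: conj_permutes_lines_def)
  finally show ?thesis by simp
qed

lemma line_of_surj: assumes "i < 14" shows "\<exists>x\<in>carrier L32. line_of x = i"
proof -
  have "list_all (\<lambda>(a, b, c). is_basis a b c) line_bases \<and> map (\<lambda>(a, b, c). line_index a b) line_bases = [0..<14]"
    by (simp add: line_bases_def is_basis_def line_index_def xor_table_def upt_rec)
  moreover obtain a b c where t: "line_bases ! i = (a, b, c)" by (cases "line_bases ! i") auto
  moreover have "length line_bases = 14" by (simp add: line_bases_def)
  ultimately have "is_basis a b c" "line_index a b = i"
    using assms nth_mem[of i line_bases] nth_map[of i line_bases "\<lambda>(a, b, c). line_index a b"]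
    by (auto simp: list_all_iff)
  then show ?thesis using lin_in_L32 by (intro bexI[of _ "lin a b c"]) (auto simp: line_of_def lin_def)
qed

lemma embed_conj_transitive:
  assumes "i < 14" "j < 14"
  shows "\<exists>g\<in>carrier L32. embed g \<circ> invol i \<circ> inv\<^bsub>M22\<^esub> (embed g) = invol j"
proof -
  obtain x y where x: "x \<in> carrier L32" "line_of x = i" and y: "y \<in> carrier L32" "line_of y = j"
    using line_of_surj assms by metis
  define g where "g = y \<circ> inv' x"
  have g: "g \<in> carrier L32" using L32_comp[OF y(1) L32_inv_closed[OF x(1)]] by (simp add: g_def)
  have "g \<circ> x = y"
    using permutes_inverses(2)[OF L32_permutes[OF x(1)]] by (simp add: g_def fun_eq_iff)
  then show ?thesis using embed_conj_invol[OF g x(1)] x(2) y(2) g by auto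
qed

section \<open>The stabiliser of an oriented line\<close>

definition line_stab :: "(nat \<Rightarrow> nat) set" where
  "line_stab = {p \<in> carrier L32. (p 1, p 2) \<in> {(1, 2), (2, 3), (3, 1)}}"

lemma line_stab_rotates:
  assumes "h \<in> line_stab"
  shows "(h 1 = 1 \<and> h 2 = 2 \<and> h 3 = 3) \<or> (h 1 = 2 \<and> h 2 = 3 \<and> h 3 = 1) \<or> (h 1 = 3 \<and> h 2 = 1 \<and> h 3 = 2)"
proof -
  have "h \<in> carrier L32" using assms by (simp add: line_stab_def)
  then have "h 3 = xor_table (h 1) (h 2)" by (rule L32_3)
  moreover have "xor_table 1 2 = 3" "xor_table 2 3 = 1" "xor_table 3 1 = 2" by (simp_all add: xor_table_def)
  ultimately show ?thesis using assms by (auto simp: line_stab_def)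
qed

lemma line_stabI:
  "h \<in> carrier L32 \<Longrightarrow> (h 1 = 1 \<and> h 2 = 2) \<or> (h 1 = 2 \<and> h 2 = 3) \<or> (h 1 = 3 \<and> h 2 = 1) \<Longrightarrow> h \<in> line_stab"
  by (auto simp: line_stab_def)

lemma line_stab_subgroup: "subgroup line_stab L32"
proof (rule group.subgroupI[OF L32_group])
  show "line_stab \<subseteq> carrier L32" by (auto simp: line_stab_def)
  show "line_stab \<noteq> {}" using L32_id by (auto simp: line_stab_def)
next
  fix h assume h: "h \<in> line_stab"
  then have hc: "h \<in> carrier L32" by (simp add: line_stab_def)
  have "inv' h \<in> line_stab"
    using line_stab_rotates[OF h] L32_inv_apply[OF hc] by (intro line_stabI[OF L32_inv_closed[OF hc]]) metis
  then show "inv\<^bsub>L32\<^esub> h \<in> line_stab" using L32_inv[OF hc] by simp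
next
  fix h k assume h: "h \<in> line_stab" and k: "k \<in> line_stab"
  have "h \<in> carrier L32" "k \<in> carrier L32" using h k by (auto simp: line_stab_def)
  then have "h \<circ> k \<in> line_stab"
    using line_stab_rotates[OF h] line_stab_rotates[OF k] by (intro line_stabI L32_comp) auto
  then show "h \<otimes>\<^bsub>L32\<^esub> k \<in> line_stab" by simp
qed

lemma l_coset_line_stab:
  assumes x: "x \<in> carrier L32"
  shows "x <#\<^bsub>L32\<^esub> line_stab = {y \<in> carrier L32. line_of y = line_of x}"
proof
  have x3: "x 3 = xor_table (x 1) (x 2)" by (rule L32_3[OF x])
  show "x <#\<^bsub>L32\<^esub> line_stab \<subseteq> {y \<in> carrier L32. line_of y = line_of x}"
  proof
    fix y assume "y \<in> x <#\<^bsub>L32\<^esub> line_stab"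
    then obtain h where h: "h \<in> line_stab" and y: "y = x \<circ> h" by (auto simp: l_coset_def)
    have "h \<in> carrier L32" using h by (simp add: line_stab_def)
    moreover have "line_of y = line_of x"
      using line_stab_rotates[OF h] x3 line_index_rotate[OF L32_is_flag[OF x]] unfolding y line_of_def
      by auto
    ultimately show "y \<in> {y \<in> carrier L32. line_of y = line_of x}" using L32_comp[OF x] y by simp
  qed
  show "{y \<in> carrier L32. line_of y = line_of x} \<subseteq> x <#\<^bsub>L32\<^esub> line_stab"
  proof
    fix y assume "y \<in> {y \<in> carrier L32. line_of y = line_of x}"
    then have y: "y \<in> carrier L32" and l: "line_of y = line_of x" by auto
    have flag: "(y 1, y 2) = (x 1, x 2) \<or> (y 1, y 2) = (x 2, x 3) \<or> (y 1, y 2) = (x 3, x 1)"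
      using line_index_eq_imp_rotated[OF L32_is_flag[OF x] L32_is_flag[OF y]] l x3
      by (simp add: line_of_def)
    define h where "h = inv' x \<circ> y"
    have "inv' x (x 1) = 1" "inv' x (x 2) = 2" "inv' x (x 3) = 3" using L32_inv_apply[OF x] by auto
    then have "h \<in> line_stab"
      using flag unfolding h_def by (intro line_stabI L32_comp L32_inv_closed x y) auto
    moreover have "y = x \<circ> h"
      unfolding h_def using permutes_inverses(1)[OF L32_permutes[OF x]] by (simp add: fun_eq_iff)
    ultimately show "y \<in> x <#\<^bsub>L32\<^esub> line_stab" by (auto simp: l_coset_def)
  qed
qed

definition coset_line :: "(nat \<Rightarrow> nat) set \<Rightarrow> nat" where
  "coset_line C = line_of (SOME y. y \<in> C)"

lemma coset_line: assumes x: "x \<in> carrier L32" shows "coset_line (x <#\<^bsub>L32\<^esub> line_stab) = line_of x"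
proof -
  have "x \<in> x <#\<^bsub>L32\<^esub> line_stab" using x l_coset_line_stab by simp
  then have "(SOME y. y \<in> x <#\<^bsub>L32\<^esub> line_stab) \<in> x <#\<^bsub>L32\<^esub> line_stab"
    by (rule someI[of "\<lambda>y. y \<in> x <#\<^bsub>L32\<^esub> line_stab"])
  then show ?thesis unfolding coset_line_def using l_coset_line_stab[OF x] by simp
qed

lemma coset_line_bij: "bij_betw coset_line {x <#\<^bsub>L32\<^esub> line_stab | x. x \<in> carrier L32} {..<14}"
proof -
  let ?C = "{x <#\<^bsub>L32\<^esub> line_stab | x. x \<in> carrier L32}"
  have "inj_on coset_line ?C"
  proof
    fix C D assume "C \<in> ?C" "D \<in> ?C" and e: "coset_line C = coset_line D"
    then obtain x y where "x \<in> carrier L32" "C = x <#\<^bsub>L32\<^esub> line_stab"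
      and "y \<in> carrier L32" "D = y <#\<^bsub>L32\<^esub> line_stab" by auto
    then show "C = D" using e coset_line l_coset_line_stab by simp
  qed
  moreover have "coset_line ` ?C = {..<14}"
  proof
    show "coset_line ` ?C \<subseteq> {..<14}" using coset_line line_of_less by auto
    show "{..<14} \<subseteq> coset_line ` ?C"
    proof
      fix i assume "i \<in> {..<14::nat}"
      then obtain x where "x \<in> carrier L32" "line_of x = i" using line_of_surj by auto
      then show "i \<in> coset_line ` ?C" using coset_line by (auto intro!: image_eqI[of _ _ "x <#\<^bsub>L32\<^esub> line_stab"])
    qed
  qed
  ultimately show ?thesis by (simp add: bij_betw_def)
qed

text \<open>The action on the four points 4..7 off the line, shifted to \<open>{1..4}\<close>.\<close>
definition act_off_line :: "(nat \<Rightarrow> nat) \<Rightarrow> nat \<Rightarrow> nat" where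
  "act_off_line p i = (if i \<in> {1..4} then p (i + 3) - 3 else i)"

fun cycles_prod :: "nat list list \<Rightarrow> nat \<Rightarrow> nat" where
  "cycles_prod [] = id"
| "cycles_prod (c # cs) = cycle_of_list c \<circ> cycles_prod cs"

lemma cycles_prod_fixes:
  assumes "i \<notin> {1..4}" shows "list_all (\<lambda>c. set c \<subseteq> {1..4}) cs \<Longrightarrow> cycles_prod cs i = i"
proof (induction cs)
  case (Cons c cs)
  then have "i \<notin> set c" using assms by auto
  then show ?case using Cons by (simp add: id_outside_supp)
qed simp

lemma cycles_prod_in_alt_group:
  "list_all (\<lambda>c. distinct c \<and> length c = 3 \<and> set c \<subseteq> {1..4}) cs \<Longrightarrow> cycles_prod cs \<in> carrier (alt_group 4)"
proof (induction cs)
  case Nil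
  have "id \<in> carrier (alt_group 4)"
    using monoid.one_closed[OF group.is_monoid[OF alt_group_is_group]] alt_group_one by metis
  then show ?case by (simp only: cycles_prod.simps)
next
  case (Cons c cs)
  then have "cycle_of_list c \<in> three_cycles 4" by auto
  then have "cycle_of_list c \<in> carrier (alt_group 4)" using three_cycles_incl by blast
  moreover have "cycles_prod cs \<in> carrier (alt_group 4)" using Cons by simp
  ultimately have "cycle_of_list c \<otimes>\<^bsub>alt_group 4\<^esub> cycles_prod cs \<in> carrier (alt_group 4)"
    by (rule monoid.m_closed[OF group.is_monoid[OF alt_group_is_group]])
  then show ?case by (simp only: cycles_prod.simps alt_group_mult)
qed

text \<open>The twelve elements of the line stabiliser, given by their images of 1, 2, 4, with their
  actions off the line as products of 3-cycles.\<close>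
definition line_stab_table :: "((nat \<times> nat \<times> nat) \<times> nat list list) list" where
  "line_stab_table = [((1,2,4), []), ((1,2,5), [[1,2,3],[2,3,4]]), ((1,2,6), [[1,2,3],[1,2,4]]),
    ((1,2,7), [[1,2,3],[1,4,3]]), ((2,3,4), [[2,3,4]]), ((2,3,5), [[1,2,4]]), ((2,3,6), [[1,3,2]]),
    ((2,3,7), [[1,4,3]]), ((3,1,4), [[2,4,3]]), ((3,1,5), [[1,2,3]]), ((3,1,6), [[1,3,4]]),
    ((3,1,7), [[1,4,2]])]"

lemma line_stab_table_bases:
  "map fst line_stab_table = [(1,2,4), (1,2,5), (1,2,6), (1,2,7), (2,3,4), (2,3,5), (2,3,6), (2,3,7),
     (3,1,4), (3,1,5), (3,1,6), (3,1,7)]"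
  by (simp add: line_stab_table_def)

lemma line_stab_table_act:
  "list_all (\<lambda>((a, b, c), cs). list_all (\<lambda>c. distinct c \<and> length c = 3 \<and> set c \<subseteq> {1..4}) cs
     \<and> (\<forall>i\<in>{1,2,3,4}. act_off_line (lin a b c) i = cycles_prod cs i)) line_stab_table"
  by code_simp

lemma line_stab_eq_lin:
  assumes h: "h \<in> line_stab"
  shows "(h 1, h 2, h 4) \<in> set (map fst line_stab_table) \<and> h = lin (h 1) (h 2) (h 4)"
proof -
  have hc: "h \<in> carrier L32" using h by (simp add: line_stab_def)
  have b: "is_basis (h 1) (h 2) (h 4)" by (rule L32_is_basis[OF hc])
  have "h 4 \<noteq> h 1" "h 4 \<noteq> h 2" "h 4 \<noteq> h 3" using b L32_3[OF hc] by (auto simp: is_basis_def)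
  moreover have "{h 1, h 2, h 3} = {1, 2, 3}" using line_stab_rotates[OF h] by auto
  ultimately have "h 4 \<in> {4, 5, 6, 7}" using b unfolding is_basis_def set_1_7 by auto
  moreover have "(h 1, h 2) \<in> {(1, 2), (2, 3), (3, 1)}" using h by (simp add: line_stab_def)
  ultimately show ?thesis using L32_eq_lin[OF hc] unfolding line_stab_table_bases by auto
qed

lemma lin_in_line_stab: assumes "(a, b, c) \<in> set (map fst line_stab_table)" shows "lin a b c \<in> line_stab"
proof -
  have "is_basis a b c" and "(a = 1 \<and> b = 2) \<or> (a = 2 \<and> b = 3) \<or> (a = 3 \<and> b = 1)"
    using assms unfolding line_stab_table_bases set_simps insert_iff empty_iff prod.inject
    by (elim disjE conjE; simp add: is_basis_def xor_table_def)+
  then show ?thesis using lin_in_L32 by (intro line_stabI) (auto simp: lin_def)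
qed

lemma card_line_stab: "card line_stab = 12"
proof -
  have eq: "line_stab = (\<lambda>(a, b, c). lin a b c) ` set (map fst line_stab_table)"
    using line_stab_eq_lin lin_in_line_stab by force
  have "inj_on (\<lambda>(a, b, c). lin a b c) (set (map fst line_stab_table))"
  proof (rule inj_onI)
    fix s t :: "nat \<times> nat \<times> nat"
    assume e: "(\<lambda>(a, b, c). lin a b c) s = (\<lambda>(a, b, c). lin a b c) t"
    obtain a b c a' b' c' where s: "s = (a, b, c)" and t: "t = (a', b', c')" by (cases s, cases t) auto
    have "lin a b c 1 = lin a' b' c' 1" "lin a b c 2 = lin a' b' c' 2" "lin a b c 4 = lin a' b' c' 4"
      using e s t by simp_all
    then show "s = t" using s t by (simp add: lin_def)
  qed
  then have "card line_stab = card (set (map fst line_stab_table))" unfolding eq by (rule card_image)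
  also have "\<dots> = 12" unfolding line_stab_table_bases by simp
  finally show ?thesis .
qed

lemma line_stab_off_line: assumes h: "h \<in> line_stab" and v: "v \<in> {4..7}" shows "h v \<in> {4..7}"
proof -
  have "\<forall>t\<in>set (map fst line_stab_table). \<forall>v\<in>{4,5,6,7}. (case t of (a, b, c) \<Rightarrow> lin a b c v) \<in> {4,5,6,7}"
    unfolding line_stab_table_bases by (simp add: lin_def xor_table_def)
  moreover have "v \<in> {4,5,6,7}" using v by auto
  ultimately have "h v \<in> {4,5,6,7}" using line_stab_eq_lin[OF h] by fastforce
  then show ?thesis by auto
qed

lemma act_off_line_in_alt_group: assumes h: "h \<in> line_stab" shows "act_off_line h \<in> carrier (alt_group 4)"
proof -
  obtain cs where "((h 1, h 2, h 4), cs) \<in> set line_stab_table"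
    using line_stab_eq_lin[OF h] by auto
  then have "list_all (\<lambda>c. distinct c \<and> length c = 3 \<and> set c \<subseteq> {1..4}) cs
      \<and> (\<forall>i\<in>{1,2,3,4}. act_off_line (lin (h 1) (h 2) (h 4)) i = cycles_prod cs i)"
    using line_stab_table_act unfolding list_all_iff by fastforce
  then have cs: "list_all (\<lambda>c. distinct c \<and> length c = 3 \<and> set c \<subseteq> {1..4}) cs"
    and act: "\<forall>i\<in>{1,2,3,4}. act_off_line (lin (h 1) (h 2) (h 4)) i = cycles_prod cs i"
    by (rule conjunct1, rule conjunct2)
  have "act_off_line h = cycles_prod cs"
  proof
    fix i show "act_off_line h i = cycles_prod cs i"
    proof (cases "i \<in> {1..4}")
      case True
      then have "i \<in> {1,2,3,4}" by auto
      then show ?thesis using act line_stab_eq_lin[OF h] by metis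
    next
      case False
      then have "act_off_line h i = i" unfolding act_off_line_def by (rule if_not_P)
      then show ?thesis using cycles_prod_fixes[OF False] cs by (simp add: list_all_iff)
    qed
  qed
  then show ?thesis using cycles_prod_in_alt_group[OF cs] by simp
qed

lemma act_off_line_comp:
  assumes h: "h \<in> line_stab" and k: "k \<in> line_stab"
  shows "act_off_line (h \<circ> k) = act_off_line h \<circ> act_off_line k"
proof
  fix i show "act_off_line (h \<circ> k) i = (act_off_line h \<circ> act_off_line k) i"
  proof (cases "i \<in> {1..4}")
    case True
    then have "k (i + 3) \<in> {4..7}" using line_stab_off_line[OF k] by auto
    then have j: "k (i + 3) - 3 \<in> {1..4}" "k (i + 3) - 3 + 3 = k (i + 3)" by auto
    have "act_off_line (h \<circ> k) i = h (k (i + 3)) - 3" "act_off_line k i = k (i + 3) - 3"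
      using True unfolding act_off_line_def by simp_all
    moreover have "act_off_line h (k (i + 3) - 3) = h (k (i + 3)) - 3"
      using j unfolding act_off_line_def by simp
    ultimately show ?thesis by simp
  next
    case False
    have "act_off_line (h \<circ> k) i = i" "act_off_line h i = i" "act_off_line k i = i"
      unfolding act_off_line_def using False by (rule if_not_P)+
    then show ?thesis by simp
  qed
qed

lemma act_off_line_inj: "inj_on act_off_line line_stab"
proof (rule inj_onI)
  fix h k assume h: "h \<in> line_stab" and k: "k \<in> line_stab" and e: "act_off_line h = act_off_line k"
  have hc: "h \<in> carrier L32" and kc: "k \<in> carrier L32" using h k by (auto simp: line_stab_def)
  have off: "h v = k v" if v: "v \<in> {4..7}" for v
  proof -
    have "v - 3 \<in> {1..4}" "v - 3 + 3 = v" using v by auto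
    then have "h v - 3 = k v - 3" using fun_cong[OF e, of "v - 3"] by (simp add: act_off_line_def)
    then show ?thesis using line_stab_off_line[OF h v] line_stab_off_line[OF k v] by auto
  qed
  have "xor 4 5 = (1::nat)" "xor 4 6 = (2::nat)" by simp_all
  then have "h 1 = xor (h 4) (h 5)" "k 1 = xor (k 4) (k 5)" "h 2 = xor (h 4) (h 6)" "k 2 = xor (k 4) (k 6)"
    using L32_xor[OF hc, of 4 5] L32_xor[OF kc, of 4 5] L32_xor[OF hc, of 4 6] L32_xor[OF kc, of 4 6]
    by simp_all
  then have "h 1 = k 1" "h 2 = k 2" "h 4 = k 4" using off by auto
  then show "h = k" using L32_eq_lin[OF hc] L32_eq_lin[OF kc] by metis
qed

lemma line_stab_iso_alt_group: "L32\<lparr>carrier := line_stab\<rparr> \<cong> alt_group 4"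
proof -
  have "act_off_line \<in> hom (L32\<lparr>carrier := line_stab\<rparr>) (alt_group 4)"
    by (rule homI) (auto simp: act_off_line_in_alt_group act_off_line_comp alt_group_mult)
  moreover have card: "card (carrier (alt_group 4)) = 12"
    using alt_group_card_carrier[of 4] by (simp add: fact_numeral)
  then have "finite (carrier (alt_group 4))" by (metis card.infinite zero_neq_numeral)
  then have "act_off_line ` line_stab = carrier (alt_group 4)"
    using card_image[OF act_off_line_inj] card_line_stab card act_off_line_in_alt_group
    by (intro card_subset_eq) auto
  then have "bij_betw act_off_line line_stab (carrier (alt_group 4))"
    using act_off_line_inj by (simp add: bij_betw_def)
  ultimately show ?thesis unfolding is_iso_def iso_def by auto
qed

section \<open>The involutions generate M22\<close>

definition invol_subgroup :: "(nat \<Rightarrow> nat) set" where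
  "invol_subgroup = generate M22 (invol ` {..<14})"

lemma invol_subgroup_subgroup: "subgroup invol_subgroup M22"
  unfolding invol_subgroup_def using invol_in_M22
  by (intro group.generate_is_subgroup[OF M22_group]) auto

lemma invol_subgroup_comp: "p \<in> invol_subgroup \<Longrightarrow> q \<in> invol_subgroup \<Longrightarrow> p \<circ> q \<in> invol_subgroup"
  using subgroup.m_closed[OF invol_subgroup_subgroup] by fastforce

lemma id_in_invol_subgroup: "id \<in> invol_subgroup"
  using subgroup.one_closed[OF invol_subgroup_subgroup] by simp

definition schreier_words :: "nat list list" where "schreier_words = [[2,13,8,7,13,1], [6,9,1,11,3,0], [9,13,12,10,0], [1,13,1,4,3,1], [10,6,4,3,11], [9,2,5,10,11], [11,9,13,11,10], [6,7,8,7,2,1], [6,11,5,8,7], [8,4,12,8,2], [1,12,7,8,3], [4,0,6,1,7], [4,6,3,4,8], [0,6,7,12,13,2], [13,6,10,1,2], [12,4,8,4,13], [5,13,12,9,1,0], [4,7,10,4,3,0], [3,8,7,12,3,0], [5,7,6,2,11], [1,13,11,1,6,0], [4,0,12,8,5], [9,13,6,10,4]]"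

lemma schreier_words: "list_all (\<lambda>k. set (schreier_words ! k) \<subseteq> {..<14}
    \<and> eval_word 23 involution_table (schreier_words ! k) = schreier_table ! k) [0..<23]"
  by code_simp

lemma schreier_in_invol_subgroup: assumes k: "k < 23" shows "schreier k \<in> invol_subgroup"
proof -
  have w: "set (schreier_words ! k) \<subseteq> {..<14}"
    "eval_word 23 involution_table (schreier_words ! k) = schreier_table ! k"
    using schreier_words k by (simp_all add: list_all_iff)
  have "perm_of_list (involution_table ! i) \<in> invol_subgroup \<and> length (involution_table ! i) = 23"
    if "i \<in> set (schreier_words ! k)" for i
    using that w(1) involution_table_length
    by (auto simp: invol_subgroup_def invol_def intro: generate.incl)
  then have "perm_of_list (eval_word 23 involution_table (schreier_words ! k)) \<in> invol_subgroup"
    using eval_word_in[of _ involution_table invol_subgroup 23] invol_subgroup_comp id_in_invol_subgroup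
    by blast
  then show ?thesis using w(2) schreier_table[OF k] by simp
qed

lemma M23_eq_cosets: "carrier M23 \<subseteq> {m23_a ^^ k \<circ> g | k g. k < 23 \<and> g \<in> invol_subgroup}"
  (is "_ \<subseteq> ?X")
proof -
  interpret S: group "sym_group 23" by (rule sym_group_is_group)
  have gens: "{m23_a, m23_b} \<subseteq> carrier (sym_group 23)"
    using m23_a_in_sym_group m23_b_in_sym_group by auto
  have "?X \<subseteq> carrier (sym_group 23)"
  proof
    fix p assume "p \<in> ?X"
    then obtain k g where "p = m23_a ^^ k \<circ> g" "g \<in> invol_subgroup" by auto
    moreover have "g \<in> carrier M23" using \<open>g \<in> invol_subgroup\<close> subgroup.subset[OF invol_subgroup_subgroup]
      by (auto simp: carrier_M22)
    ultimately show "p \<in> carrier (sym_group 23)"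
      using M23_comp m23_a_pow_in_M23 subgroup.subset[OF M23_subgroup] by auto
  qed
  moreover have "\<one>\<^bsub>sym_group 23\<^esub> \<in> ?X"
  proof -
    have one: "\<one>\<^bsub>sym_group 23\<^esub> = m23_a ^^ 0 \<circ> id" by (simp add: sym_group_def)
    have "\<exists>k g. m23_a ^^ 0 \<circ> id = m23_a ^^ k \<circ> g \<and> k < 23 \<and> g \<in> invol_subgroup"
      using id_in_invol_subgroup by (intro exI[of _ 0] exI[of _ id]) simp
    then show ?thesis unfolding one by blast
  qed
  moreover have "s \<otimes>\<^bsub>sym_group 23\<^esub> x \<in> ?X" if s: "s \<in> {m23_a, m23_b}" and x: "x \<in> ?X" for s x
  proof -
    obtain k g where x: "x = m23_a ^^ k \<circ> g" "k < 23" "g \<in> invol_subgroup" using x by auto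
    show ?thesis
    proof (cases "s = m23_a")
      case True
      have "m23_a \<circ> x = m23_a ^^ (Suc k mod 23) \<circ> g"
        by (simp add: x(1) m23_a_pow_mod comp_assoc)
      then show ?thesis using True x(3)
        by (intro CollectI exI[of _ "Suc k mod 23"] exI[of _ g]) (simp add: sym_group_def)
    next
      case False
      then have "s = m23_b" using s by simp
      obtain j where j: "j < 23" "m23_b \<circ> m23_a ^^ k = m23_a ^^ j \<circ> schreier k"
        using b_comp_a_pow by blast
      have "s \<circ> x = (m23_b \<circ> m23_a ^^ k) \<circ> g" using \<open>s = m23_b\<close> x(1) by (simp add: comp_assoc)
      also have "\<dots> = m23_a ^^ j \<circ> (schreier k \<circ> g)" using j(2) by (simp add: comp_assoc)
      finally have "s \<circ> x = m23_a ^^ j \<circ> (schreier k \<circ> g)" .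
      moreover have "schreier k \<circ> g \<in> invol_subgroup"
        using x(2,3) schreier_in_invol_subgroup invol_subgroup_comp by blast
      ultimately show ?thesis using j(1)
        by (intro CollectI exI[of _ j] exI[of _ "schreier k \<circ> g"]) (simp add: sym_group_def)
    qed
  qed
  moreover have "\<exists>n::nat>0. s [^]\<^bsub>sym_group 23\<^esub> n = \<one>\<^bsub>sym_group 23\<^esub>" if "s \<in> {m23_a, m23_b}" for s
  proof -
    have a: "m23_a [^]\<^bsub>sym_group 23\<^esub> (23::nat) = \<one>\<^bsub>sym_group 23\<^esub>"
      and b: "m23_b [^]\<^bsub>sym_group 23\<^esub> (5::nat) = \<one>\<^bsub>sym_group 23\<^esub>"
      by (simp_all only: sym_group_pow sym_group_one m23_a_pow_23 m23_b_pow_5)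
    from that consider "s = m23_a" | "s = m23_b" by blast
    then show ?thesis
    proof cases
      case 1 then show ?thesis using a by (intro exI[of _ "23::nat"]) simp
    next
      case 2 then show ?thesis using b by (intro exI[of _ "5::nat"]) simp
    qed
  qed
  ultimately show ?thesis
    unfolding carrier_M23 by (rule S.generate_subset_if_left_mult_closed[OF gens])
qed

lemma generate_invols: "generate M22 (invol ` {..<14}) = carrier M22"
proof
  show "generate M22 (invol ` {..<14}) \<subseteq> carrier M22"
    using subgroup.subset[OF invol_subgroup_subgroup] by (simp add: invol_subgroup_def)
  show "carrier M22 \<subseteq> generate M22 (invol ` {..<14})"
  proof
    fix p assume p: "p \<in> carrier M22"
    then obtain k g where pk: "p = m23_a ^^ k \<circ> g" "k < 23" "g \<in> invol_subgroup"
      using M23_eq_cosets by (auto simp: carrier_M22)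
    have "g 23 = 23" using pk(3) subgroup.subset[OF invol_subgroup_subgroup] by (auto simp: carrier_M22)
    then have "(m23_a ^^ k) 23 = 23" using p pk(1) by (simp add: carrier_M22)
    then have "k = 0" using m23_a_pow_23_apply[of k] pk(2) by (cases "k = 0") auto
    then show "p \<in> generate M22 (invol ` {..<14})" using pk by (simp add: invol_subgroup_def)
  qed
qed

theorem proposition2p1:
  shows "\<exists>(N :: (nat \<Rightarrow> nat) set) (t :: nat \<Rightarrow> (nat \<Rightarrow> nat)) (\<phi> :: (nat \<Rightarrow> nat) \<Rightarrow> (nat \<Rightarrow> nat)) H.
     subgroup N M22 \<and> \<phi> \<in> iso L32 (M22 \<lparr> carrier := N \<rparr>) \<and>
     subgroup H L32 \<and> L32 \<lparr> carrier := H \<rparr> \<cong> alt_group 4 \<and>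
     inj_on t {..<14} \<and>
     (\<forall>i<14. t i \<in> carrier M22 \<and> t i \<noteq> \<one>\<^bsub>M22\<^esub> \<and> t i \<otimes>\<^bsub>M22\<^esub> t i = \<one>\<^bsub>M22\<^esub>) \<and>
     generate M22 (t ` {..<14}) = carrier M22 \<and>
     (\<forall>n\<in>N. \<forall>i<14. \<exists>j<14. n \<otimes>\<^bsub>M22\<^esub> t i \<otimes>\<^bsub>M22\<^esub> inv\<^bsub>M22\<^esub> n = t j) \<and>
     (\<forall>i<14. \<forall>j<14. \<exists>n\<in>N. n \<otimes>\<^bsub>M22\<^esub> t i \<otimes>\<^bsub>M22\<^esub> inv\<^bsub>M22\<^esub> n = t j) \<and>
     (\<exists>\<beta>. bij_betw \<beta> {x <#\<^bsub>L32\<^esub> H | x. x \<in> carrier L32} {..<14} \<and>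
        (\<forall>g\<in>carrier L32. \<forall>x\<in>carrier L32.
           \<phi> g \<otimes>\<^bsub>M22\<^esub> t (\<beta> (x <#\<^bsub>L32\<^esub> H)) \<otimes>\<^bsub>M22\<^esub> inv\<^bsub>M22\<^esub> (\<phi> g)
             = t (\<beta> ((g \<otimes>\<^bsub>L32\<^esub> x) <#\<^bsub>L32\<^esub> H))))"
proof (intro exI conjI)
  show "subgroup embedded_L32 M22" by (rule embedded_L32_subgroup)
  show "embed \<in> iso L32 (M22\<lparr>carrier := embedded_L32\<rparr>)" by (rule embed_iso)
  show "subgroup line_stab L32" by (rule line_stab_subgroup)
  show "L32\<lparr>carrier := line_stab\<rparr> \<cong> alt_group 4" by (rule line_stab_iso_alt_group)
  show "inj_on invol {..<14}" by (rule invol_inj)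
  show "\<forall>i<14. invol i \<in> carrier M22 \<and> invol i \<noteq> \<one>\<^bsub>M22\<^esub> \<and> invol i \<otimes>\<^bsub>M22\<^esub> invol i = \<one>\<^bsub>M22\<^esub>"
    using invol_in_M22 invol_involution by simp
  show "generate M22 (invol ` {..<14}) = carrier M22" by (rule generate_invols)
  show "\<forall>n\<in>embedded_L32. \<forall>i<14. \<exists>j<14. n \<otimes>\<^bsub>M22\<^esub> invol i \<otimes>\<^bsub>M22\<^esub> inv\<^bsub>M22\<^esub> n = invol j"
    using embed_conj_invol line_of_surj line_of_less L32_comp by (fastforce simp: embedded_L32_def)
  show "\<forall>i<14. \<forall>j<14. \<exists>n\<in>embedded_L32. n \<otimes>\<^bsub>M22\<^esub> invol i \<otimes>\<^bsub>M22\<^esub> inv\<^bsub>M22\<^esub> n = invol j"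
    using embed_conj_transitive by (fastforce simp: embedded_L32_def)
  show "bij_betw coset_line {x <#\<^bsub>L32\<^esub> line_stab | x. x \<in> carrier L32} {..<14}"
    by (rule coset_line_bij)
  show "\<forall>g\<in>carrier L32. \<forall>x\<in>carrier L32. embed g \<otimes>\<^bsub>M22\<^esub> invol (coset_line (x <#\<^bsub>L32\<^esub> line_stab))
      \<otimes>\<^bsub>M22\<^esub> inv\<^bsub>M22\<^esub> (embed g) = invol (coset_line ((g \<otimes>\<^bsub>L32\<^esub> x) <#\<^bsub>L32\<^esub> line_stab))"
    using embed_conj_invol coset_line L32_comp by simp
qed

end
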